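(* The \textsc{Lcp} problem (Alice holds a string $A$, Bob holds a string $B$, and they must determine $\ell=\mathrm{LCP}(A,B)$) has a randomized public-coin communication protocol using $O(\lg z)$ rounds and $O(\lg \ell)$ total bits of communication, where $\ell\le n$ is the length of the longest common prefix of $A$ and $B$ and $z\le \ell$ is the number of phrases in the LZ77 parse (without self-references) of this prefix.
   Context: Strings are over a finite alphabet $\Sigma$ known to both parties; $n$ bounds the string lengths. For strings $X,Y$, $\mathrm{LCP}(X,Y)$ is the largest $\ell\ge 0$ with $X[1..\ell]=Y[1..\ell]$. The LZ77 parse of a string $S$ divides $S$ greedily from left to right into phrases $f_1f_2\cdots f_z$: the $i$-th phrase, starting at position $u_i$, is the longest substring having an occurrence (its source) starting to the left of $u_i$, followed by the next symbol. It is represented by a tuple $(s_i,l_i,\alpha_i)$, where $s_i$ is the start of the earlier occurrence, $l_i$ its length and $\alpha_i$ the symbol at position $u_i+l_i$; $s_1=l_1=0$, $u_1=1$, and the phrase ends at $e_i=u_i+l_i$. "Without self-references" means each source may not overlap its phrase: $s_i+l_i\le u_i$. The parties use a fixed deterministic rule (e.g. always the leftmost source) so equal strings get equal parses. In the public-coin randomized model the parties share an infinite string of independent unbiased random bits, are otherwise deterministic, and the output must be correct on every input with probability at least a fixed constant greater than $1/2$. A round is one message; communication is the total number of bits sent. *)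

theory Defs
  imports "HOL-Probability.Probability"
begin

text \<open>Strings are lists over a finite alphabet (type class finite); positions 0-based.\<close>

definition lcp :: "'a list \<Rightarrow> 'a list \<Rightarrow> nat" where
  "lcp A B = (GREATEST l. l \<le> length A \<and> l \<le> length B \<and> take l A = take l B)"

text \<open>The factor S[u..u+l) has an earlier, non-overlapping occurrence starting at s:
  s + l \<le> u (no self-reference).\<close>
definition has_src :: "'a list \<Rightarrow> nat \<Rightarrow> nat \<Rightarrow> bool" where
  "has_src S u l \<longleftrightarrow> (\<exists>s. s + l \<le> u \<and> take l (drop s S) = take l (drop u S))"

text \<open>Length of the LZ77 phrase starting at u: the longest copyable factor plus the
  following symbol (which must exist).\<close>
definition phrase_len :: "'a list \<Rightarrow> nat \<Rightarrow> nat" where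
  "phrase_len S u = Suc (GREATEST l. l < length S - u \<and> has_src S u l)"

function lz_count_from :: "'a list \<Rightarrow> nat \<Rightarrow> nat" where
  "lz_count_from S u =
     (if length S \<le> u then 0 else Suc (lz_count_from S (u + phrase_len S u)))"
  by auto
termination
  by (relation "Wellfounded.measure (\<lambda>(S, u). length S - u)") (auto simp: phrase_len_def)

definition lz_phrases :: "'a list \<Rightarrow> nat" where
  "lz_phrases S = lz_count_from S 0"

text \<open>Given the public coins and the
  transcript so far, turn says who speaks next (Some True = Alice, Some False = Bob)
  or that the protocol has halted (None).\<close>
record 'a protocol =
  turn :: "(nat \<Rightarrow> bool) \<Rightarrow> bool list list \<Rightarrow> bool option"
  alice_msg :: "'a list \<Rightarrow> (nat \<Rightarrow> bool) \<Rightarrow> bool list list \<Rightarrow> bool list"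
  bob_msg :: "'a list \<Rightarrow> (nat \<Rightarrow> bool) \<Rightarrow> bool list list \<Rightarrow> bool list"
  outp :: "(nat \<Rightarrow> bool) \<Rightarrow> bool list list \<Rightarrow> nat"

fun transcript :: "'a protocol \<Rightarrow> 'a list \<Rightarrow> 'a list \<Rightarrow> (nat \<Rightarrow> bool) \<Rightarrow> nat \<Rightarrow> bool list list" where
  "transcript P A B r 0 = []"
| "transcript P A B r (Suc k) =
     (let t = transcript P A B r k in
      case turn P r t of
        None \<Rightarrow> t
      | Some True \<Rightarrow> t @ [alice_msg P A r t]
      | Some False \<Rightarrow> t @ [bob_msg P B r t])"

text \<open>A run on coins r halts with output ans using at most R rounds (messages) and at most
  Bits bits of communication in total.\<close>
definition good_run ::
  "'a protocol \<Rightarrow> 'a list \<Rightarrow> 'a list \<Rightarrow> nat \<Rightarrow> real \<Rightarrow> real \<Rightarrow> (nat \<Rightarrow> bool) \<Rightarrow> bool" where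
  "good_run P A B ans R Bits r \<longleftrightarrow>
     (\<exists>k. let t = transcript P A B r k in
          turn P r t = None \<and> outp P r t = ans \<and>
          real (length t) \<le> R \<and> real (sum_list (map length t)) \<le> Bits)"

definition coins :: "(nat \<Rightarrow> bool) measure" where
  "coins = (\<Pi>\<^sub>M i\<in>(UNIV :: nat set). measure_pmf (bernoulli_pmf (1/2)))"

end

theory Submission
  imports Defs "HOL-Library.Countable"
begin

text \<open>
  Append a sentinel to each string (different for Alice and Bob) and look at the LZ77 parse
  of Alice's string. Its phrase boundaries inside the common prefix coincide with those of
  Bob's string, so Alice and Bob can decide, for any \<open>j\<close>, whether the first \<open>j\<close> phrases
  are common by comparing random 8-bit hashes of them. By exponential search followed by a noisy
  binary search on the implicit tree of dyadic intervals, they find the index \<open>j\<close> of the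
  phrase containing position \<open>\<ell>\<close>; this costs \<open>O(lg j) = O(lg z)\<close> rounds of
  constant size. The phrase \<open>j\<close> is copied from an earlier position \<open>s\<close> with length \<open>k\<close>;
  Alice sends \<open>s\<close> and \<open>k\<close>, and since \<open>B[s..s+k)\<close> is part of the common prefix, Bob
  computes \<open>\<ell>\<close> by matching his suffix at the start of phrase \<open>j\<close> against \<open>B[s..s+k)\<close>.
  The binary search tolerates a constant error probability per comparison: the potential
  \<open>2\<^sup>d - 1\<close>, where \<open>d\<close> bounds the distance to the target leaf, shrinks by a constant
  factor in expectation per step.
\<close>

section \<open>Uniformly random bit strings\<close>

definition bitstrings :: "nat \<Rightarrow> bool list set" where
  "bitstrings m = {xs. length xs = m}"

lemma finite_bitstrings [simp]: "finite (bitstrings m)"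
  unfolding bitstrings_def using finite_lists_length_eq[of "UNIV::bool set" m] by simp

lemma card_bitstrings: "card (bitstrings m) = 2 ^ m"
  unfolding bitstrings_def using card_lists_length_eq[of "UNIV::bool set" m] by simp

definition avg_bits :: "nat \<Rightarrow> (bool list \<Rightarrow> real) \<Rightarrow> real" where
  "avg_bits m f = (\<Sum>xs\<in>bitstrings m. f xs) / 2 ^ m"

definition prob_bits :: "nat \<Rightarrow> (bool list \<Rightarrow> bool) \<Rightarrow> real" where
  "prob_bits m Q = real (card {xs \<in> bitstrings m. Q xs}) / 2 ^ m"

lemma sum_bitstrings_append:
  "(\<Sum>xs\<in>bitstrings (a + b). f xs) = (\<Sum>ys\<in>bitstrings a. \<Sum>zs\<in>bitstrings b. f (ys @ zs))"
proof -
  have bij: "bij_betw (\<lambda>(ys, zs). ys @ zs) (bitstrings a \<times> bitstrings b) (bitstrings (a + b))"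
    by (rule bij_betwI[where g="\<lambda>xs. (take a xs, drop a xs)"]) (auto simp: bitstrings_def)
  show ?thesis
    using sum.reindex_bij_betw[OF bij, of f] by (simp add: sum.cartesian_product case_prod_beta)
qed

lemma avg_bits_append: "avg_bits (a + b) f = avg_bits a (\<lambda>ys. avg_bits b (\<lambda>zs. f (ys @ zs)))"
  unfolding avg_bits_def sum_bitstrings_append
  by (simp add: sum_divide_distrib power_add divide_divide_eq_left mult.commute)

lemma avg_bits_mono: "(\<And>xs. length xs = m \<Longrightarrow> f xs \<le> g xs) \<Longrightarrow> avg_bits m f \<le> avg_bits m g"
  unfolding avg_bits_def by (intro divide_right_mono sum_mono) (auto simp: bitstrings_def)

lemma avg_bits_cong: "(\<And>xs. length xs = m \<Longrightarrow> f xs = g xs) \<Longrightarrow> avg_bits m f = avg_bits m g"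
  unfolding avg_bits_def by (intro arg_cong2[where f="(/)"] sum.cong) (auto simp: bitstrings_def)

lemma avg_bits_const [simp]: "avg_bits m (\<lambda>_. c) = c"
  unfolding avg_bits_def by (simp add: card_bitstrings)

lemma avg_bits_add: "avg_bits m (\<lambda>x. f x + g x) = avg_bits m f + avg_bits m g"
  unfolding avg_bits_def by (simp add: sum.distrib add_divide_distrib)

lemma avg_bits_cmult: "avg_bits m (\<lambda>x. c * f x) = c * avg_bits m f"
  unfolding avg_bits_def by (simp add: sum_distrib_left)

lemma avg_bits_prefix:
  "(\<And>ys zs. length ys = a \<Longrightarrow> f (ys @ zs) = g ys) \<Longrightarrow> avg_bits (a + b) f = avg_bits a g"
  by (simp add: avg_bits_append) (rule avg_bits_cong, simp)

lemma prob_bits_eq_avg: "prob_bits m Q = avg_bits m (\<lambda>xs. if Q xs then 1 else 0)"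
proof -
  have "(\<Sum>xs\<in>bitstrings m. if Q xs then 1 else 0 :: real) = real (card {xs \<in> bitstrings m. Q xs})"
    by (simp add: sum.If_cases Int_def)
  then show ?thesis unfolding prob_bits_def avg_bits_def by simp
qed

lemma prob_bits_mono: "(\<And>xs. length xs = m \<Longrightarrow> P xs \<Longrightarrow> Q xs) \<Longrightarrow> prob_bits m P \<le> prob_bits m Q"
  unfolding prob_bits_eq_avg by (rule avg_bits_mono) auto

lemma prob_bits_disj_le: "prob_bits m (\<lambda>xs. P xs \<or> Q xs) \<le> prob_bits m P + prob_bits m Q"
  unfolding prob_bits_eq_avg avg_bits_add[symmetric] by (rule avg_bits_mono) auto

lemma prob_bits_not: "prob_bits m (\<lambda>xs. \<not> P xs) = 1 - prob_bits m P"
proof -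
  have "prob_bits m (\<lambda>xs. \<not> P xs) = avg_bits m (\<lambda>xs. 1 + (-1) * (if P xs then 1 else 0))"
    unfolding prob_bits_eq_avg by (rule avg_bits_cong) auto
  then show ?thesis unfolding prob_bits_eq_avg avg_bits_add avg_bits_cmult by simp
qed

text \<open>Flipping bit \<open>q b\<close> is an involution that swaps the strings with \<open>xs!p b = xs!q b\<close>
  and those without, leaving the earlier constraints intact.\<close>
lemma card_bitstrings_pairs_equal:
  fixes p q :: "nat \<Rightarrow> nat"
  assumes "inj_on p {..<b}" "inj_on q {..<b}" "\<And>k k'. k < b \<Longrightarrow> k' < b \<Longrightarrow> p k \<noteq> q k'"
    and "\<And>k. k < b \<Longrightarrow> p k < m \<and> q k < m"
  shows "real (card {xs \<in> bitstrings m. \<forall>k<b. xs!p k = xs!q k}) * 2 ^ b = 2 ^ m"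
  using assms
proof (induction b)
  case 0
  then show ?case by (simp add: card_bitstrings)
next
  case (Suc b)
  define S where "S = {xs \<in> bitstrings m. \<forall>k<b. xs!p k = xs!q k}"
  define E where "E = {xs::bool list. xs!p b = xs!q b}"
  define flip where "flip = (\<lambda>xs::bool list. xs[q b := \<not> xs!q b])"
  have IH: "real (card S) * 2 ^ b = 2 ^ m" unfolding S_def
    by (rule Suc.IH) (use Suc.prems in \<open>auto simp: inj_on_def\<close>)
  have qb: "q b < m" "p b < m" using Suc.prems(4) by auto
  have qb_fresh: "\<And>k. k < b \<Longrightarrow> q b \<noteq> p k \<and> q b \<noteq> q k" using Suc.prems(1-3)
    by (metis inj_onD lessThan_iff less_Suc_eq nat_neq_iff)
  have pq: "p b \<noteq> q b" using Suc.prems(3) by auto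
  have flip_flip: "\<And>xs. flip (flip xs) = xs"
    unfolding flip_def by (case_tac "q b < length xs") (simp_all add: list_update_beyond not_less)
  have bij: "bij_betw flip (S \<inter> E) (S - E)"
  proof (rule bij_betwI[where g=flip])
    show "flip \<in> S \<inter> E \<rightarrow> S - E" "flip \<in> S - E \<rightarrow> S \<inter> E"
      using qb qb_fresh pq by (auto simp: S_def E_def flip_def bitstrings_def nth_list_update)
  qed (auto simp: flip_flip)
  have "finite S" unfolding S_def by (rule finite_subset[OF _ finite_bitstrings[of m]]) auto
  then have "card S = card (S \<inter> E) + card (S - E)"
    by (metis Diff_Diff_Int Int_commute card_Diff_subset_Int card_Int_Diff finite_Int)
  moreover have "card (S - E) = card (S \<inter> E)" using bij_betw_same_card[OF bij] by simp
  moreover have "{xs \<in> bitstrings m. \<forall>k<Suc b. xs!p k = xs!q k} = S \<inter> E"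
    by (auto simp: S_def E_def less_Suc_eq)
  ultimately show ?case using IH by simp
qed

lemma prob_bits_pairs_equal:
  fixes p q :: "nat \<Rightarrow> nat"
  assumes "inj_on p {..<b}" "inj_on q {..<b}" "\<And>k k'. k < b \<Longrightarrow> k' < b \<Longrightarrow> p k \<noteq> q k'"
    and "\<And>k. k < b \<Longrightarrow> p k < m \<and> q k < m"
  shows "prob_bits m (\<lambda>xs. \<forall>k<b. xs!p k = xs!q k) = 1 / 2 ^ b"
  using card_bitstrings_pairs_equal[OF assms] unfolding prob_bits_def by (simp add: field_simps)

definition block :: "nat \<Rightarrow> bool list \<Rightarrow> nat \<Rightarrow> bool list" where
  "block Bs xs i = take Bs (drop (i * Bs) xs)"

lemma block_append: "Suc j * Bs \<le> length ys \<Longrightarrow> block Bs (ys @ zs) j = block Bs ys j"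
  unfolding block_def by (simp add: add.commute)

lemma block_append_last: "length ys = j * Bs \<Longrightarrow> length zs = Bs \<Longrightarrow> block Bs (ys @ zs) j = zs"
  unfolding block_def by simp

lemma prob_bits_block: "Suc j * Bs \<le> M \<Longrightarrow> prob_bits M (\<lambda>xs. P (block Bs xs j)) = prob_bits Bs P"
proof -
  assume "Suc j * Bs \<le> M"
  then have M: "M = j * Bs + (Bs + (M - Suc j * Bs))" by simp
  have "prob_bits M (\<lambda>xs. P (block Bs xs j))
      = avg_bits (j * Bs) (\<lambda>ys. avg_bits (Bs + (M - Suc j * Bs))
          (\<lambda>zs. if P (block Bs (ys @ zs) j) then 1 else 0))"
    by (subst M) (simp only: prob_bits_eq_avg avg_bits_append)
  also have "\<dots> = avg_bits (j * Bs) (\<lambda>ys. prob_bits Bs P)"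
    unfolding prob_bits_eq_avg by (intro avg_bits_cong avg_bits_prefix) (simp add: block_def)
  finally show ?thesis by simp
qed

definition coin_cylinder :: "nat \<Rightarrow> bool list \<Rightarrow> (nat \<Rightarrow> bool) set" where
  "coin_cylinder m xs = {r. map r [0..<m] = xs}"

lemma space_coins: "space coins = UNIV"
  unfolding coins_def by (simp add: space_PiM)

interpretation coins: prob_space coins
  unfolding coins_def by (rule prob_space_PiM) (auto intro: measure_pmf.prob_space_axioms)

lemma emeasure_coin_cylinder:
  assumes "length xs = m"
  shows "emeasure coins (coin_cylinder m xs) = ennreal ((1/2) ^ m)"
proof -
  have "coin_cylinder m xs
      = prod_emb UNIV (\<lambda>i. measure_pmf (bernoulli_pmf (1/2))) {..<m} (Pi\<^sub>E {..<m} (\<lambda>i. {xs!i}))"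
    using assms unfolding coin_cylinder_def prod_emb_def
    by (auto simp: PiE_iff restrict_def list_eq_iff_nth_eq)
  then have "emeasure coins (coin_cylinder m xs)
      = (\<Prod>i\<in>{..<m}. emeasure (measure_pmf (bernoulli_pmf (1/2))) {xs!i})"
    unfolding coins_def
    by (simp only:) (rule emeasure_PiM_emb, auto intro: measure_pmf.prob_space_axioms)
  also have "\<dots> = (\<Prod>i\<in>{..<m}. ennreal (1/2))"
    by (intro prod.cong refl) (auto simp: emeasure_pmf_single)
  also have "\<dots> = ennreal (\<Prod>i\<in>{..<m}. 1/2)"
    by (rule prod_ennreal) simp
  finally show ?thesis by simp
qed

lemma measure_coins_prefix_event:
  "measure coins {r \<in> space coins. Q (map r [0..<m])} = prob_bits m Q"
proof -
  let ?X = "{xs \<in> bitstrings m. Q xs}"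
  have eq: "{r \<in> space coins. Q (map r [0..<m])} = (\<Union>xs\<in>?X. coin_cylinder m xs)"
    by (auto simp: space_coins coin_cylinder_def bitstrings_def)
  have sets: "coin_cylinder m xs \<in> sets coins" if "length xs = m" for xs
    by (rule emeasure_neq_0_sets) (simp add: emeasure_coin_cylinder that)
  have fin: "finite ?X" by (rule finite_subset[OF _ finite_bitstrings[of m]]) auto
  have "measure coins (\<Union>xs\<in>?X. coin_cylinder m xs)
      = (\<Sum>xs\<in>?X. measure coins (coin_cylinder m xs))"
    by (rule coins.finite_measure_finite_Union)
      (use fin sets[unfolded coin_cylinder_def] in
        \<open>auto simp: bitstrings_def disjoint_family_on_def coin_cylinder_def\<close>)
  also have "\<dots> = (\<Sum>xs\<in>?X. (1/2) ^ m)"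
    by (intro sum.cong refl) (auto simp: bitstrings_def measure_def emeasure_coin_cylinder)
  finally show ?thesis using eq by (simp add: prob_bits_def power_divide)
qed

definition coins_of_list :: "bool list \<Rightarrow> nat \<Rightarrow> bool" where
  "coins_of_list xs i = (if i < length xs then xs!i else False)"

lemma map_coins_of_list: "length xs = M \<Longrightarrow> map (coins_of_list xs) [0..<M] = xs"
  by (auto simp: coins_of_list_def list_eq_iff_nth_eq)

lemma le_lcp_iff:
  "m \<le> lcp X Y \<longleftrightarrow> m \<le> length X \<and> m \<le> length Y \<and> take m X = take m Y"
proof -
  let ?P = "\<lambda>l. l \<le> length X \<and> l \<le> length Y \<and> take l X = take l Y"
  have P_lcp: "?P (lcp X Y)"
    unfolding lcp_def by (rule GreatestI_nat[where k=0 and b="length X"]) auto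
  have "?P l \<Longrightarrow> l \<le> lcp X Y" for l
    unfolding lcp_def by (rule Greatest_le_nat[where b="length X"]) auto
  moreover have "?P m" if "m \<le> lcp X Y"
    using that P_lcp by (metis le_trans min.absorb1 take_take)
  ultimately show ?thesis by blast
qed

lemma lcp_eqI:
  assumes "\<And>m. m \<le> k \<longleftrightarrow> m \<le> length X \<and> m \<le> length Y \<and> take m X = take m Y"
  shows "lcp X Y = k"
proof (rule antisym)
  show "lcp X Y \<le> k" using assms[of "lcp X Y"] le_lcp_iff[of "lcp X Y" X Y] by simp
  show "k \<le> lcp X Y" using assms[of k] le_lcp_iff[of k X Y] by simp
qed

lemma lcp_le_length: "lcp X Y \<le> length X" "lcp X Y \<le> length Y"
  using le_lcp_iff[of "lcp X Y" X Y] by auto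

lemma take_lcp: "take (lcp X Y) X = take (lcp X Y) Y"
  using le_lcp_iff[of "lcp X Y" X Y] by auto

lemma lcp_sym: "lcp X Y = lcp Y X"
  by (rule lcp_eqI) (auto simp: le_lcp_iff)

lemma lcp_Nil [simp]: "lcp [] Y = 0" "lcp X [] = 0"
  by (auto intro: lcp_eqI)

lemma lcp_Cons_Cons [simp]: "lcp (x # X) (y # Y) = (if x = y then Suc (lcp X Y) else 0)"
  by (rule lcp_eqI, case_tac m) (auto simp: le_lcp_iff)

lemma lcp_drop: "u \<le> lcp X Y \<Longrightarrow> lcp (drop u X) (drop u Y) = lcp X Y - u"
proof (induction X arbitrary: Y u)
  case (Cons x X)
  then show ?case by (cases Y; cases u) (auto split: if_splits)
qed simp

lemma lcp_take: "lcp X (take k Y) = min (lcp X Y) k"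
proof (induction X arbitrary: Y k)
  case (Cons x X)
  then show ?case by (cases Y; cases k) auto
qed simp

section \<open>The LZ77 parse\<close>

lemma has_src_0: "has_src S u 0"
  unfolding has_src_def by auto

lemma has_src_mono:
  assumes "has_src S u l" "l' \<le> l"
  shows "has_src S u l'"
proof -
  obtain s where s: "s + l \<le> u" "take l (drop s S) = take l (drop u S)"
    using assms(1) unfolding has_src_def by blast
  have "take l' (drop s S) = take l' (drop u S)"
    using s(2) assms(2) by (metis min.absorb1 take_take)
  then show ?thesis
    unfolding has_src_def using s(1) assms(2) by (intro exI[of _ s]) simp
qed

lemma take_drop_take_le: "s + l \<le> m \<Longrightarrow> take l (drop s (take m S)) = take l (drop s S)"
  by (simp add: drop_take take_take min_def)

lemma has_src_take_eq:
  assumes "u + l \<le> m" "take m S = take m T"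
  shows "has_src S u l = has_src T u l"
proof -
  have "take l (drop s S) = take l (drop s T)" if "s + l \<le> m" for s
    using that assms(2) take_drop_take_le[of s l m S] take_drop_take_le[of s l m T] by simp
  then have "s + l \<le> u \<Longrightarrow> take l (drop s S) = take l (drop u S) \<longleftrightarrow>
      take l (drop s T) = take l (drop u T)" for s
    using assms(1) by simp
  then show ?thesis unfolding has_src_def by blast
qed

lemma has_src_map: "inj f \<Longrightarrow> has_src (map f S) u l = has_src S u l"
  unfolding has_src_def by (simp add: take_map drop_map inj_map_eq_map)

text \<open>The phrase starting at \<open>u\<close> is \<open>S[u..u+copy_len S u]\<close>, its last symbol not being copied.\<close>
definition copy_len :: "'x list \<Rightarrow> nat \<Rightarrow> nat" where
  "copy_len S u = (GREATEST l. l < length S - u \<and> has_src S u l)"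

lemma phrase_len_copy_len: "phrase_len S u = Suc (copy_len S u)"
  unfolding phrase_len_def copy_len_def ..

lemma copy_len_less_and_has_src:
  "u < length S \<Longrightarrow> copy_len S u < length S - u \<and> has_src S u (copy_len S u)"
  unfolding copy_len_def by (rule GreatestI_nat[where k=0 and b="length S"]) (auto simp: has_src_0)

lemma copy_len_less: "u < length S \<Longrightarrow> copy_len S u < length S - u"
  using copy_len_less_and_has_src by blast

lemma has_src_copy_len: "u < length S \<Longrightarrow> has_src S u (copy_len S u)"
  using copy_len_less_and_has_src by blast

lemma le_copy_len: "l < length S - u \<Longrightarrow> has_src S u l \<Longrightarrow> l \<le> copy_len S u"
  unfolding copy_len_def by (rule Greatest_le_nat[where b="length S"]) auto

lemma copy_len_map: "inj f \<Longrightarrow> copy_len (map f S) u = copy_len S u"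
  unfolding copy_len_def by (simp add: has_src_map)

text \<open>The whole phrase lies in the common prefix and ends before the end of \<open>S\<close>, so both its
  source and the failure of every longer source are visible in the common prefix.\<close>
lemma copy_len_take_eq:
  assumes u: "u < length S" and e: "u + Suc (copy_len S u) \<le> m"
    and m: "m < length S" "m \<le> length T" and t: "take m S = take m T"
  shows "copy_len T u = copy_len S u"
proof -
  let ?l = "copy_len S u"
  have src: "has_src T u ?l"
    using has_src_take_eq[of u ?l m S T] has_src_copy_len[OF u] e t by simp
  have "\<not> has_src S u (Suc ?l)"
    using le_copy_len[of "Suc ?l" S u] e m by linarith
  then have "\<not> has_src T u (Suc ?l)"
    using has_src_take_eq[of u "Suc ?l" m S T] e t by simp
  moreover have "has_src T u (copy_len T u)"
    using has_src_copy_len[of u T] e m by simp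
  ultimately have "copy_len T u \<le> ?l"
    using has_src_mono[of T u "copy_len T u" "Suc ?l"] by (metis not_less_eq_eq)
  moreover have "?l \<le> copy_len T u"
    using le_copy_len[OF _ src] e m by simp
  ultimately show ?thesis by simp
qed

text \<open>Start of the \<open>j\<close>-th phrase (counting from 0); it stays at \<open>length S\<close> once the parse is
  exhausted.\<close>
fun phrase_start :: "'x list \<Rightarrow> nat \<Rightarrow> nat" where
  "phrase_start S 0 = 0"
| "phrase_start S (Suc j) =
     (if phrase_start S j < length S then phrase_start S j + phrase_len S (phrase_start S j)
      else phrase_start S j)"

lemma phrase_start_le_length: "phrase_start S j \<le> length S"
  by (induction j) (use copy_len_less in \<open>fastforce simp: phrase_len_copy_len\<close>)+

lemma phrase_start_le_Suc: "phrase_start S j \<le> phrase_start S (Suc j)"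
  by simp

lemma phrase_start_mono: "j \<le> j' \<Longrightarrow> phrase_start S j \<le> phrase_start S j'"
  by (rule lift_Suc_mono_le[of "phrase_start S"]) auto

lemma min_le_phrase_start: "min j (length S) \<le> phrase_start S j"
  by (induction j) (auto simp: phrase_len_copy_len)

lemma phrase_start_less_Suc:
  "phrase_start S j < length S \<Longrightarrow> phrase_start S j < phrase_start S (Suc j)"
  by (simp add: phrase_len_copy_len)

lemma phrase_start_take_eq:
  assumes t: "take m S = take m T" and m: "m < length S" "m \<le> length T"
  shows "phrase_start S j \<le> m \<Longrightarrow> phrase_start T j = phrase_start S j"
proof (induction j)
  case (Suc j)
  let ?u = "phrase_start S j"
  have "?u \<le> m" using Suc.prems phrase_start_le_Suc[of S j] by linarith
  then have IH: "phrase_start T j = ?u" and uS: "?u < length S" using Suc.IH m by auto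
  have end_le: "?u + Suc (copy_len S ?u) \<le> m" using Suc.prems uS by (simp add: phrase_len_copy_len)
  then have "?u < length T" using m by simp
  moreover have "copy_len T ?u = copy_len S ?u" by (rule copy_len_take_eq[OF uS end_le m t])
  ultimately show ?case using IH uS by (simp add: phrase_len_copy_len)
qed simp

lemma lz_count_from_phrase_start:
  "phrase_start S j < length S \<Longrightarrow> lz_count_from S 0 = j + lz_count_from S (phrase_start S j)"
proof (induction j)
  case (Suc j)
  have a: "phrase_start S j < length S"
    using Suc.prems by (cases "phrase_start S j < length S") auto
  then have "lz_count_from S (phrase_start S j) = Suc (lz_count_from S (phrase_start S (Suc j)))"
    by (subst lz_count_from.simps) simp
  then show ?case using Suc.IH[OF a] by simp
qed simp

lemma less_lz_phrases: "phrase_start S j < length S \<Longrightarrow> j < lz_phrases S"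
  using lz_count_from_phrase_start[of S j] lz_count_from.simps[of S "phrase_start S j"]
  unfolding lz_phrases_def by simp

lemma lz_phrases_map: "inj f \<Longrightarrow> lz_phrases (map f S) = lz_phrases S"
proof -
  assume f: "inj f"
  have "lz_count_from (map f S) u = lz_count_from S u" for u
  proof (induction S u rule: lz_count_from.induct)
    case (1 S u)
    then show ?case
      using f by (subst (1 2) lz_count_from.simps) (simp add: phrase_len_copy_len copy_len_map)
  qed
  then show ?thesis unfolding lz_phrases_def .
qed

text \<open>Distinct end markers guarantee that position \<open>lcp A B\<close> lies inside both strings, hence
  inside some phrase of the parse.\<close>
definition end_marked :: "bool \<Rightarrow> 'a list \<Rightarrow> ('a + bool) list" where
  "end_marked b S = map Inl S @ [Inr b]"

lemma length_end_marked [simp]: "length (end_marked b S) = Suc (length S)"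
  by (simp add: end_marked_def)

lemma lcp_end_marked [simp]: "b \<noteq> b' \<Longrightarrow> lcp (end_marked b X) (end_marked b' Y) = lcp X Y"
  unfolding end_marked_def
proof (induction X arbitrary: Y)
  case Nil
  then show ?case by (cases Y) auto
next
  case (Cons x X)
  then show ?case by (cases Y) auto
qed

lemma take_lcp_end_marked:
  "take (lcp A B) (end_marked False A) = take (lcp A B) (end_marked True B)"
  using take_lcp[of "end_marked False A" "end_marked True B"] by simp

lemma phrase_start_agree:
  assumes "phrase_start (end_marked False A) j \<le> lcp A B"
  shows "phrase_start (end_marked True B) j = phrase_start (end_marked False A) j"
  by (rule phrase_start_take_eq[OF take_lcp_end_marked]) (use lcp_le_length[of A B] assms in auto)

lemma le_lcp_if_phrase_start_le: "phrase_start (end_marked False A) j \<le> lcp A B \<Longrightarrow> j \<le> lcp A B"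
  using min_le_phrase_start[of j "end_marked False A"] lcp_le_length[of A B] by simp

definition lcp_phrase :: "'a list \<Rightarrow> 'a list \<Rightarrow> nat" where
  "lcp_phrase A B = (GREATEST j. phrase_start (end_marked False A) j \<le> lcp A B)"

lemma phrase_start_le_lcp_iff:
  "phrase_start (end_marked False A) j \<le> lcp A B \<longleftrightarrow> j \<le> lcp_phrase A B"
proof
  show "phrase_start (end_marked False A) j \<le> lcp A B \<Longrightarrow> j \<le> lcp_phrase A B"
    unfolding lcp_phrase_def
    by (rule Greatest_le_nat[where b="lcp A B"]) (auto intro: le_lcp_if_phrase_start_le)
  have "phrase_start (end_marked False A) (lcp_phrase A B) \<le> lcp A B"
    unfolding lcp_phrase_def
    by (rule GreatestI_nat[where k=0 and b="lcp A B"]) (auto intro: le_lcp_if_phrase_start_le)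
  then show "j \<le> lcp_phrase A B \<Longrightarrow> phrase_start (end_marked False A) j \<le> lcp A B"
    using phrase_start_mono[of j "lcp_phrase A B" "end_marked False A"] by simp
qed

lemma lcp_phrase_le_lcp: "lcp_phrase A B \<le> lcp A B"
  using phrase_start_le_lcp_iff le_lcp_if_phrase_start_le by blast

lemma lcp_phrase_le_lz_phrases: "lcp_phrase A B \<le> lz_phrases (take (lcp A B) A)"
proof (cases "lcp_phrase A B")
  case (Suc j)
  let ?A = "end_marked False A" and ?l = "lcp A B"
  let ?T = "take ?l ?A"
  have l_less: "?l < length ?A" using lcp_le_length[of A B] by simp
  have "phrase_start ?A j \<le> ?l" "phrase_start ?A (Suc j) \<le> ?l"
    unfolding phrase_start_le_lcp_iff Suc by simp_all
  moreover from this have "phrase_start ?T j = phrase_start ?A j"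
    by (intro phrase_start_take_eq[of ?l]) (use l_less in auto)
  ultimately have "phrase_start ?T j < length ?T"
    using phrase_start_less_Suc[of ?A j] l_less by simp
  then have "j < lz_phrases ?T" by (rule less_lz_phrases)
  moreover have "?T = map Inl (take ?l A)"
    using lcp_le_length[of A B] by (simp add: end_marked_def take_map)
  ultimately show ?thesis
    using Suc lz_phrases_map[of "Inl :: 'a \<Rightarrow> 'a + bool" "take ?l A"] by (simp add: inj_def)
qed simp

definition phrase_prefix :: "'x list \<Rightarrow> nat \<Rightarrow> 'x list" where
  "phrase_prefix S j = take (phrase_start S j) S"

lemma length_phrase_prefix_le: "length (phrase_prefix S j) \<le> length S"
  unfolding phrase_prefix_def by simp

lemma phrase_prefix_eq_iff:
  "phrase_prefix (end_marked False A) j = phrase_prefix (end_marked True B) j \<longleftrightarrow> j \<le> lcp_phrase A B"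
proof -
  let ?A = "end_marked False A" and ?B = "end_marked True B"
  have "take (phrase_start ?A j) ?A = take (phrase_start ?B j) ?B
      \<longleftrightarrow> phrase_start ?A j \<le> lcp A B"
  proof
    assume h: "take (phrase_start ?A j) ?A = take (phrase_start ?B j) ?B"
    then have "phrase_start ?B j = phrase_start ?A j"
      using phrase_start_le_length[of ?A j] phrase_start_le_length[of ?B j]
      by (metis length_take min_absorb2)
    then show "phrase_start ?A j \<le> lcp A B"
      using le_lcp_iff[of "phrase_start ?A j" ?A ?B] h phrase_start_le_length[of ?A j]
        phrase_start_le_length[of ?B j] by simp
  next
    assume h: "phrase_start ?A j \<le> lcp A B"
    have "take (phrase_start ?A j) (take (lcp A B) ?A)
        = take (phrase_start ?A j) (take (lcp A B) ?B)"
      using take_lcp_end_marked by metis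
    then show "take (phrase_start ?A j) ?A = take (phrase_start ?B j) ?B"
      using h phrase_start_agree[OF h] by (simp add: min_absorb1)
  qed
  then show ?thesis unfolding phrase_prefix_def phrase_start_le_lcp_iff .
qed

definition copy_src :: "'x list \<Rightarrow> nat \<Rightarrow> nat" where
  "copy_src S u = (SOME s. s + copy_len S u \<le> u \<and>
     take (copy_len S u) (drop s S) = take (copy_len S u) (drop u S))"

lemma copy_src_spec:
  assumes "u < length S"
  shows "copy_src S u + copy_len S u \<le> u"
    and "take (copy_len S u) (drop (copy_src S u) S) = take (copy_len S u) (drop u S)"
proof -
  have "\<exists>s. s + copy_len S u \<le> u \<and>
      take (copy_len S u) (drop s S) = take (copy_len S u) (drop u S)"
    using has_src_copy_len[OF assms] unfolding has_src_def .
  from someI_ex[OF this]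
  show "copy_src S u + copy_len S u \<le> u"
    and "take (copy_len S u) (drop (copy_src S u) S) = take (copy_len S u) (drop u S)"
    unfolding copy_src_def by auto
qed

text \<open>Bob recovers the LCP from the start \<open>u\<close> of the phrase containing it and from its source:
  the source lies in the common prefix, so Bob holds it in his own string.\<close>
lemma lcp_via_copy:
  fixes A B :: "'a list"
  defines "u \<equiv> phrase_start (end_marked False A) (lcp_phrase A B)"
  shows "phrase_start (end_marked True B) (lcp_phrase A B) = u"
    and "u + lcp (drop u (end_marked True B)) (take (copy_len (end_marked False A) u)
        (drop (copy_src (end_marked False A) u) (end_marked True B))) = lcp A B"
    and "copy_src (end_marked False A) u \<le> lcp A B"
    and "copy_len (end_marked False A) u \<le> lcp A B"
proof -
  let ?A = "end_marked False A" and ?B = "end_marked True B" and ?l = "lcp A B"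
  let ?s = "copy_src ?A u" and ?k = "copy_len ?A u"
  have u_le: "u \<le> ?l" unfolding u_def using phrase_start_le_lcp_iff[of A "lcp_phrase A B" B] by simp
  then show "phrase_start ?B (lcp_phrase A B) = u" unfolding u_def by (rule phrase_start_agree)
  have u_less: "u < length ?A" using u_le lcp_le_length[of A B] by simp
  have "\<not> phrase_start ?A (Suc (lcp_phrase A B)) \<le> ?l"
    using phrase_start_le_lcp_iff[of A "Suc (lcp_phrase A B)" B] by simp
  then have beyond: "?l < u + Suc ?k"
    using u_less unfolding u_def by (simp add: phrase_len_copy_len)
  have s1: "?s + ?k \<le> u" and s2: "take ?k (drop ?s ?A) = take ?k (drop u ?A)"
    using copy_src_spec[OF u_less] by auto
  show "?s \<le> ?l" "?k \<le> ?l" using s1 u_le by auto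
  have "take ?k (drop ?s ?B) = take ?k (drop ?s (take ?l ?B))"
    using s1 u_le by (simp add: take_drop_take_le)
  also have "\<dots> = take ?k (drop ?s (take ?l ?A))" by (simp add: take_lcp_end_marked)
  also have "\<dots> = take ?k (drop u ?A)" using s1 u_le s2 by (simp add: take_drop_take_le)
  finally have src_eq: "take ?k (drop ?s ?B) = take ?k (drop u ?A)" .
  have "lcp (drop u ?B) (drop u ?A) = ?l - u"
    using lcp_drop[of u ?B ?A] u_le lcp_sym[of ?A ?B] by simp
  then have "lcp (drop u ?B) (take ?k (drop ?s ?B)) = min (?l - u) ?k"
    unfolding src_eq lcp_take by simp
  then show "u + lcp (drop u ?B) (take ?k (drop ?s ?B)) = ?l" using beyond u_le by simp
qed

section \<open>Binary search with noisy comparisons\<close>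

text \<open>A node \<open>(c, h)\<close> of the complete binary tree of height \<open>K\<close> stands for the dyadic
  interval \<open>[c 2\<^sup>h, (c + 1) 2\<^sup>h)\<close>. A step asks whether the target \<open>t\<close> is at least the
  left end, the right end and the midpoint of the interval: if the answers place \<open>t\<close> inside,
  the walk descends to the child containing \<open>t\<close> (staying at a leaf), otherwise it ascends
  (staying at the root).\<close>
definition walk_step :: "nat \<Rightarrow> nat \<times> nat \<Rightarrow> bool \<Rightarrow> bool \<Rightarrow> bool \<Rightarrow> nat \<times> nat" where
  "walk_step K x r0 r1 r2 = (case x of (c, h) \<Rightarrow>
     if r0 \<and> \<not> r1 then (if h = 0 then (c, 0) else (2 * c + (if r2 then 1 else 0), h - 1))
     else (if K \<le> h then (c, h) else (c div 2, Suc h)))"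

definition walk_node :: "nat \<Rightarrow> nat \<times> nat \<Rightarrow> bool" where
  "walk_node K x = (case x of (c, h) \<Rightarrow> h \<le> K \<and> c < 2 ^ (K - h))"

text \<open>The levels at which the ancestor of \<open>(c, h)\<close> is not an ancestor of the leaf \<open>t\<close>.\<close>
definition off_path :: "nat \<Rightarrow> nat \<Rightarrow> nat \<Rightarrow> nat \<Rightarrow> nat set" where
  "off_path K t c h = {g. h \<le> g \<and> g < K \<and> t div 2 ^ g \<noteq> c div 2 ^ (g - h)}"

text \<open>The number of correct steps needed to reach the leaf \<open>t\<close>: up to the lowest common
  ancestor and back down.\<close>
definition walk_dist :: "nat \<Rightarrow> nat \<Rightarrow> nat \<times> nat \<Rightarrow> nat" where
  "walk_dist K t x = (case x of (c, h) \<Rightarrow> h + 2 * card (off_path K t c h))"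

definition correct_answers :: "nat \<Rightarrow> nat \<Rightarrow> nat \<Rightarrow> bool \<Rightarrow> bool \<Rightarrow> bool \<Rightarrow> bool" where
  "correct_answers t c h r0 r1 r2 \<longleftrightarrow>
     r0 = (c * 2 ^ h \<le> t) \<and> r1 = ((c + 1) * 2 ^ h \<le> t) \<and> r2 = ((2 * c + 1) * 2 ^ (h - 1) \<le> t)"

lemma finite_off_path [simp]: "finite (off_path K t c h)"
  unfolding off_path_def by (rule finite_subset[of _ "{..<K}"]) auto

lemma div_power_split: "h \<le> g \<Longrightarrow> (x::nat) div 2 ^ g = x div 2 ^ h div 2 ^ (g - h)"
  by (metis div_mult2_eq le_add_diff_inverse power_add)

lemma off_path_on_path:
  assumes "t div 2 ^ h = c"
  shows "off_path K t c h = {}"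
proof -
  have "t div 2 ^ g = c div 2 ^ (g - h)" if "h \<le> g" for g
    using div_power_split[OF that, of t] assms by simp
  then show ?thesis unfolding off_path_def by blast
qed

lemma off_path_parent:
  assumes "h < K"
  shows "off_path K t (c div 2) (Suc h) = off_path K t c h - {h}"
proof -
  have "c div 2 div 2 ^ (g - Suc h) = c div 2 ^ (g - h)" if "Suc h \<le> g" for g
    using that div_power_split[of 1 "g - h" c] by (simp add: Suc_diff_Suc)
  then show ?thesis unfolding off_path_def by (auto simp: Suc_le_eq)
qed

lemma off_path_child:
  assumes "b \<le> 1"
  shows "off_path K t (2 * c + b) h =
    off_path K t c (Suc h) \<union> (if t div 2 ^ h \<noteq> 2 * c + b \<and> h < K then {h} else {})"
proof -
  have up: "(2 * c + b) div 2 ^ (g - h) = c div 2 ^ (g - Suc h)" if "Suc h \<le> g" for g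
  proof -
    have "g - h = Suc (g - Suc h)" using that by simp
    then have "(2 * c + b) div 2 ^ (g - h) = (2 * c + b) div 2 div 2 ^ (g - Suc h)"
      by (simp add: div_mult2_eq)
    also have "(2 * c + b) div 2 = c" using assms by auto
    finally show ?thesis .
  qed
  show ?thesis
  proof (rule set_eqI)
    fix g
    show "g \<in> off_path K t (2 * c + b) h \<longleftrightarrow>
      g \<in> off_path K t c (Suc h) \<union> (if t div 2 ^ h \<noteq> 2 * c + b \<and> h < K then {h} else {})"
      using up[of g] unfolding off_path_def by (cases "g = h") (auto simp: Suc_le_eq)
  qed
qed

lemma walk_node_walk_step: "walk_node K x \<Longrightarrow> walk_node K (walk_step K x r0 r1 r2)"
proof (cases x)
  case (Pair c h)
  assume "walk_node K x"
  then have h: "h \<le> K" "c < 2 ^ (K - h)" using Pair by (auto simp: walk_node_def)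
  consider (down) h' where "r0 \<and> \<not> r1" "h = Suc h'" | (leaf) "r0 \<and> \<not> r1" "h = 0"
    | (root) "\<not> (r0 \<and> \<not> r1)" "K \<le> h" | (up) "\<not> (r0 \<and> \<not> r1)" "h < K"
    by (cases h) force+
  then show ?thesis
  proof cases
    case (down h')
    then have "K - h' = Suc (K - h)" using h by simp
    then have "2 * c + (if r2 then 1 else 0) < 2 ^ (K - h')" using h by auto
    then show ?thesis using Pair down h by (simp add: walk_step_def walk_node_def)
  next
    case up
    then have "K - h = Suc (K - Suc h)" by simp
    then have "c div 2 < 2 ^ (K - Suc h)" using h by auto
    then show ?thesis using Pair up by (auto simp: walk_step_def walk_node_def)
  qed (use Pair h in \<open>auto simp: walk_step_def walk_node_def\<close>)
qed

lemma walk_dist_walk_step_le: "walk_dist K t (walk_step K x r0 r1 r2) \<le> walk_dist K t x + 1"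
proof (cases x)
  case (Pair c h)
  consider (down) h' where "r0 \<and> \<not> r1" "h = Suc h'" | (leaf) "r0 \<and> \<not> r1" "h = 0"
    | (root) "\<not> (r0 \<and> \<not> r1)" "K \<le> h" | (up) "\<not> (r0 \<and> \<not> r1)" "h < K"
    by (cases h) force+
  then show ?thesis
  proof cases
    case (down h')
    let ?b = "if r2 then 1 else 0 :: nat"
    have "card (off_path K t (2 * c + ?b) h') \<le> card (off_path K t c h) + 1"
      using off_path_child[of ?b K t c h'] down by (simp add: card_insert_if)
    then show ?thesis using Pair down by (simp add: walk_step_def walk_dist_def)
  next
    case up
    have "card (off_path K t (c div 2) (Suc h)) \<le> card (off_path K t c h)"
      using off_path_parent[of h K t c] up by (simp add: card_Diff1_le)
    then show ?thesis using Pair up by (auto simp: walk_step_def walk_dist_def)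
  qed (use Pair in \<open>auto simp: walk_step_def walk_dist_def\<close>)
qed

lemma walk_step_on_path:
  assumes on: "t div 2 ^ h = c"
    and r0: "r0 = (c * 2 ^ h \<le> t)" and r1: "r1 = ((c + 1) * 2 ^ h \<le> t)"
    and r2: "r2 = ((2 * c + 1) * 2 ^ (h - 1) \<le> t)"
  shows "walk_dist K t (walk_step K (c, h) r0 r1 r2) = walk_dist K t (c, h) - 1"
    and "walk_step K (c, h) r0 r1 r2 \<noteq> (c, h) \<Longrightarrow> walk_dist K t (c, h) \<noteq> 0"
proof -
  have "c * 2 ^ h \<le> t" "t < (c + 1) * 2 ^ h"
    using on by (metis div_times_less_eq_dividend mult.commute)
      (metis on dividend_less_div_times mult.commute mult_Suc zero_less_numeral zero_less_power
        add.commute plus_1_eq_Suc)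
  then have inside: "r0 \<and> \<not> r1" unfolding r0 r1 by simp
  have dist: "walk_dist K t (c, h) = h" using off_path_on_path[OF on] by (simp add: walk_dist_def)
  show "walk_dist K t (walk_step K (c, h) r0 r1 r2) = walk_dist K t (c, h) - 1"
  proof (cases h)
    case (Suc h')
    let ?b = "if r2 then 1 else 0 :: nat"
    have "t div 2 ^ h' div 2 = c" using on div_power_split[of h' h t] Suc by simp
    moreover have "r2 \<longleftrightarrow> 2 * c + 1 \<le> t div 2 ^ h'"
      unfolding r2 Suc by (simp add: less_eq_div_iff_mult_less_eq)
    ultimately have "t div 2 ^ h' = 2 * c + ?b" by auto
    then show ?thesis
      using inside dist Suc off_path_on_path[of t h' "2 * c + ?b" K]
      by (simp add: walk_step_def walk_dist_def)
  qed (use inside dist in \<open>simp add: walk_step_def\<close>)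
  show "walk_step K (c, h) r0 r1 r2 \<noteq> (c, h) \<Longrightarrow> walk_dist K t (c, h) \<noteq> 0"
    using inside dist by (cases "h = 0") (auto simp: walk_step_def)
qed

lemma walk_step_off_path:
  assumes node: "walk_node K (c, h)" and t: "t < 2 ^ K" and off: "t div 2 ^ h \<noteq> c"
    and r0: "r0 = (c * 2 ^ h \<le> t)" and r1: "r1 = ((c + 1) * 2 ^ h \<le> t)"
  shows "walk_dist K t (walk_step K (c, h) r0 r1 r2) = walk_dist K t (c, h) - 1"
    and "walk_dist K t (c, h) \<noteq> 0"
proof -
  have "h < K"
    using node off t by (cases "h = K") (auto simp: walk_node_def)
  then have h_off: "h \<in> off_path K t c h" using off unfolding off_path_def by simp
  have "\<not> (r0 \<and> \<not> r1)"
  proof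
    assume "r0 \<and> \<not> r1"
    then have "c \<le> t div 2 ^ h" "t div 2 ^ h < c + 1"
      unfolding r0 r1 by (simp_all add: less_eq_div_iff_mult_less_eq div_less_iff_less_mult)
    then show False using off by simp
  qed
  then have "walk_step K (c, h) r0 r1 r2 = (c div 2, Suc h)"
    using \<open>h < K\<close> by (auto simp: walk_step_def)
  moreover have "card (off_path K t (c div 2) (Suc h)) = card (off_path K t c h) - 1"
    using off_path_parent[OF \<open>h < K\<close>, of t c] h_off by simp
  moreover have "card (off_path K t c h) \<ge> 1"
    using h_off by (metis One_nat_def Suc_leI card_gt_0_iff emptyE finite_off_path)
  ultimately show "walk_dist K t (walk_step K (c, h) r0 r1 r2) = walk_dist K t (c, h) - 1"
    by (simp add: walk_dist_def)
  show "walk_dist K t (c, h) \<noteq> 0" using h_off by (auto simp: walk_dist_def)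
qed

lemma walk_step_correct:
  assumes "walk_node K (c, h)" "t < 2 ^ K" "correct_answers t c h r0 r1 r2"
  shows "walk_dist K t (walk_step K (c, h) r0 r1 r2) = walk_dist K t (c, h) - 1"
    and "walk_dist K t (c, h) = 0 \<Longrightarrow> walk_step K (c, h) r0 r1 r2 = (c, h)"
proof -
  have r: "r0 = (c * 2 ^ h \<le> t)" "r1 = ((c + 1) * 2 ^ h \<le> t)" "r2 = ((2 * c + 1) * 2 ^ (h - 1) \<le> t)"
    using assms(3) by (simp_all add: correct_answers_def)
  show "walk_dist K t (walk_step K (c, h) r0 r1 r2) = walk_dist K t (c, h) - 1"
    using walk_step_on_path(1)[OF _ r] walk_step_off_path(1)[OF assms(1,2) _ r(1,2)] by blast
  show "walk_dist K t (c, h) = 0 \<Longrightarrow> walk_step K (c, h) r0 r1 r2 = (c, h)"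
    using walk_step_on_path(2)[OF _ r] walk_step_off_path(2)[OF assms(1,2) _ r(1,2)] by blast
qed

lemma walk_dist_eq_0D:
  assumes "walk_dist K t (c, h) = 0" "t < 2 ^ K" "walk_node K (c, h)"
  shows "c = t \<and> h = 0"
proof -
  have "h = 0" and "off_path K t c 0 = {}" using assms(1) by (auto simp: walk_dist_def)
  then show ?thesis using assms(2,3) unfolding off_path_def walk_node_def by (cases "K = 0") auto
qed

lemma walk_dist_root: "walk_dist K t (0, K) = K"
  unfolding walk_dist_def off_path_def by simp

text \<open>Step \<open>i\<close> of the walk answers its three comparisons with the coins in block \<open>off + i\<close>.\<close>
fun walk_run ::
  "nat \<Rightarrow> nat \<Rightarrow> nat \<Rightarrow> (nat \<Rightarrow> nat \<Rightarrow> bool list \<Rightarrow> bool) \<Rightarrow> nat \<Rightarrow> bool list \<Rightarrow> nat \<times> nat"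
  where
  "walk_run K off Bs cmp 0 xs = (0, K)"
| "walk_run K off Bs cmp (Suc i) xs = (case walk_run K off Bs cmp i xs of (c, h) \<Rightarrow>
     walk_step K (c, h) (cmp 0 (c * 2 ^ h) (block Bs xs (off + i)))
       (cmp 1 ((c + 1) * 2 ^ h) (block Bs xs (off + i)))
       (cmp 2 ((2 * c + 1) * 2 ^ (h - 1)) (block Bs xs (off + i))))"

lemma walk_run_append:
  "(off + i) * Bs \<le> length ys \<Longrightarrow> walk_run K off Bs cmp i (ys @ zs) = walk_run K off Bs cmp i ys"
proof (induction i)
  case (Suc i)
  have "(off + i) * Bs \<le> length ys"
    using Suc.prems by (meson le_trans mult_le_mono1 add_le_mono le_refl le_SucI)
  then have IH: "walk_run K off Bs cmp i (ys @ zs) = walk_run K off Bs cmp i ys" using Suc.IH by simp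
  have "block Bs (ys @ zs) (off + i) = block Bs ys (off + i)"
    by (rule block_append) (use Suc.prems in simp)
  then show ?case using IH by simp
qed simp

lemma walk_node_walk_run: "walk_node K (walk_run K off Bs cmp i xs)"
proof (induction i)
  case (Suc i)
  then show ?case by (auto split: prod.splits intro: walk_node_walk_step)
qed (simp add: walk_node_def)

definition potential :: "nat \<Rightarrow> nat \<Rightarrow> nat \<times> nat \<Rightarrow> real" where
  "potential K t x = 2 ^ walk_dist K t x - 1"

lemma potential_nonneg: "0 \<le> potential K t x"
  unfolding potential_def by simp

text \<open>A correct step halves the potential; any step at most doubles it and adds 1.\<close>
lemma potential_walk_step_le:
  assumes "walk_node K (c, h)" "t < 2 ^ K"
  shows "potential K t (walk_step K (c, h) r0 r1 r2) \<le> potential K t (c, h) / 2 +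
    (if correct_answers t c h r0 r1 r2 then 0 else 3 / 2 * potential K t (c, h) + 1)"
proof -
  define d where "d = walk_dist K t (c, h)"
  define d' where "d' = walk_dist K t (walk_step K (c, h) r0 r1 r2)"
  have "(2::real) ^ d' - 1
      \<le> (2 ^ d - 1) / 2 + (if correct_answers t c h r0 r1 r2 then 0 else 3 / 2 * (2 ^ d - 1) + 1)"
  proof (cases "correct_answers t c h r0 r1 r2")
    case True
    then have "d' = d - 1" unfolding d_def d'_def using walk_step_correct(1)[OF assms] by blast
    then show ?thesis using True by (cases d) auto
  next
    case False
    have "d' \<le> d + 1" unfolding d_def d'_def by (rule walk_dist_walk_step_le)
    then have "(2::real) ^ d' \<le> 2 ^ (d + 1)" by (intro power_increasing) auto
    then show ?thesis using False by (simp add: field_simps)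
  qed
  then show ?thesis unfolding potential_def d_def d'_def .
qed

lemma avg_potential_walk_step:
  fixes eps :: real and cmp :: "nat \<Rightarrow> nat \<Rightarrow> bool list \<Rightarrow> bool"
  assumes t: "t < 2 ^ K" and node: "walk_node K (c, h)" and eps: "0 \<le> eps"
    and err: "\<And>i p. i < 3 \<Longrightarrow> prob_bits Bs (\<lambda>z. cmp i p z \<noteq> (p \<le> t)) \<le> eps"
  shows "avg_bits Bs (\<lambda>z. potential K t (walk_step K (c, h)
      (cmp 0 (c * 2 ^ h) z) (cmp 1 ((c + 1) * 2 ^ h) z) (cmp 2 ((2 * c + 1) * 2 ^ (h - 1)) z)))
    \<le> (1 + 9 * eps) / 2 * potential K t (c, h) + 3 * eps"
proof -
  let ?p0 = "c * 2 ^ h" and ?p1 = "(c + 1) * 2 ^ h" and ?p2 = "(2 * c + 1) * 2 ^ (h - 1)"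
  let ?P = "potential K t (c, h)"
  define good where "good z \<longleftrightarrow> correct_answers t c h (cmp 0 ?p0 z) (cmp 1 ?p1 z) (cmp 2 ?p2 z)" for z
  have "prob_bits Bs (\<lambda>z. \<not> good z)
      \<le> prob_bits Bs (\<lambda>z. cmp 0 ?p0 z \<noteq> (?p0 \<le> t))
        + (prob_bits Bs (\<lambda>z. cmp 1 ?p1 z \<noteq> (?p1 \<le> t))
          + prob_bits Bs (\<lambda>z. cmp 2 ?p2 z \<noteq> (?p2 \<le> t)))"
    unfolding good_def correct_answers_def de_Morgan_conj
    by (rule order_trans[OF prob_bits_disj_le add_left_mono[OF prob_bits_disj_le]])
  also have "\<dots> \<le> eps + (eps + eps)" by (intro add_mono err) auto
  finally have bad: "prob_bits Bs (\<lambda>z. \<not> good z) \<le> 3 * eps" by simp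
  have "avg_bits Bs (\<lambda>z. potential K t (walk_step K (c, h) (cmp 0 ?p0 z) (cmp 1 ?p1 z) (cmp 2 ?p2 z)))
      \<le> avg_bits Bs (\<lambda>z. ?P / 2 + (3 / 2 * ?P + 1) * (if \<not> good z then 1 else 0))"
  proof (rule avg_bits_mono)
    fix z :: "bool list"
    have "potential K t (walk_step K (c, h) (cmp 0 ?p0 z) (cmp 1 ?p1 z) (cmp 2 ?p2 z))
        \<le> ?P / 2 + (if good z then 0 else 3 / 2 * ?P + 1)"
      using potential_walk_step_le[OF node t] unfolding good_def .
    then show "potential K t (walk_step K (c, h) (cmp 0 ?p0 z) (cmp 1 ?p1 z) (cmp 2 ?p2 z))
        \<le> ?P / 2 + (3 / 2 * ?P + 1) * (if \<not> good z then 1 else 0)"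
      by (cases "good z") auto
  qed
  also have "\<dots> = ?P / 2 + (3 / 2 * ?P + 1) * prob_bits Bs (\<lambda>z. \<not> good z)"
    unfolding avg_bits_add avg_bits_cmult prob_bits_eq_avg by simp
  also have "\<dots> \<le> ?P / 2 + (3 / 2 * ?P + 1) * (3 * eps)"
    using bad potential_nonneg[of K t "(c, h)"] by (intro add_left_mono mult_left_mono) auto
  also have "\<dots> = (1 + 9 * eps) / 2 * ?P + 3 * eps"
    by (simp add: field_simps)
  finally show ?thesis .
qed

lemma walk_run_Suc_append:
  assumes "length ys = (off + i) * Bs" "length zs = Bs"
  shows "walk_run K off Bs cmp (Suc i) (ys @ zs) = (case walk_run K off Bs cmp i ys of (c, h) \<Rightarrow>
    walk_step K (c, h) (cmp 0 (c * 2 ^ h) zs) (cmp 1 ((c + 1) * 2 ^ h) zs) (cmp 2 ((2 * c + 1) * 2 ^ (h - 1)) zs))"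
  using assms walk_run_append[of off i Bs ys K cmp zs] block_append_last[of ys "off + i" Bs zs] by simp

lemma avg_potential_walk_run_Suc:
  fixes eps :: real and cmp :: "nat \<Rightarrow> nat \<Rightarrow> bool list \<Rightarrow> bool"
  assumes t: "t < 2 ^ K" and eps: "0 \<le> eps"
    and err: "\<And>i p. i < 3 \<Longrightarrow> prob_bits Bs (\<lambda>z. cmp i p z \<noteq> (p \<le> t)) \<le> eps"
  shows "avg_bits ((off + Suc i) * Bs) (\<lambda>ys. potential K t (walk_run K off Bs cmp (Suc i) ys))
     \<le> (1 + 9 * eps) / 2 * avg_bits ((off + i) * Bs) (\<lambda>ys. potential K t (walk_run K off Bs cmp i ys))
       + 3 * eps"
proof -
  let ?mu = "(1 + 9 * eps) / 2" and ?Phi = "\<lambda>i ys. potential K t (walk_run K off Bs cmp i ys)"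
  have "avg_bits ((off + Suc i) * Bs) (?Phi (Suc i))
     = avg_bits ((off + i) * Bs) (\<lambda>ys. avg_bits Bs (\<lambda>zs. ?Phi (Suc i) (ys @ zs)))"
    using avg_bits_append[of "(off + i) * Bs" Bs] by (simp add: algebra_simps)
  also have "\<dots> \<le> avg_bits ((off + i) * Bs) (\<lambda>ys. ?mu * ?Phi i ys + 3 * eps)"
  proof (rule avg_bits_mono)
    fix ys :: "bool list" assume ys: "length ys = (off + i) * Bs"
    obtain c h where ch: "walk_run K off Bs cmp i ys = (c, h)" by fastforce
    have node: "walk_node K (c, h)" using walk_node_walk_run[of K off Bs cmp i ys] ch by simp
    have "avg_bits Bs (\<lambda>zs. ?Phi (Suc i) (ys @ zs)) = avg_bits Bs (\<lambda>z. potential K t (walk_step K (c, h)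
        (cmp 0 (c * 2 ^ h) z) (cmp 1 ((c + 1) * 2 ^ h) z) (cmp 2 ((2 * c + 1) * 2 ^ (h - 1)) z)))"
      using walk_run_Suc_append[OF ys] ch by (intro avg_bits_cong) simp
    also have "\<dots> \<le> ?mu * potential K t (c, h) + 3 * eps"
      by (rule avg_potential_walk_step[OF t node eps err])
    finally show "avg_bits Bs (\<lambda>zs. ?Phi (Suc i) (ys @ zs)) \<le> ?mu * ?Phi i ys + 3 * eps"
      using ch by simp
  qed
  also have "\<dots> = ?mu * avg_bits ((off + i) * Bs) (?Phi i) + 3 * eps"
    by (simp only: avg_bits_add avg_bits_cmult avg_bits_const)
  finally show ?thesis .
qed

lemma avg_potential_walk_run:
  fixes eps :: real and cmp :: "nat \<Rightarrow> nat \<Rightarrow> bool list \<Rightarrow> bool"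
  assumes t: "t < 2 ^ K" and eps: "0 \<le> eps" "eps < 1/9"
    and err: "\<And>i p. i < 3 \<Longrightarrow> prob_bits Bs (\<lambda>z. cmp i p z \<noteq> (p \<le> t)) \<le> eps"
  shows "avg_bits ((off + i) * Bs) (\<lambda>ys. potential K t (walk_run K off Bs cmp i ys))
     \<le> ((1 + 9 * eps) / 2) ^ i * (2 ^ K - 1) + 3 * eps / (1 - (1 + 9 * eps) / 2)"
proof (induction i)
  case 0
  have "0 \<le> 3 * eps / (1 - (1 + 9 * eps) / 2)" using eps by (intro divide_nonneg_pos) auto
  then show ?case by (simp add: potential_def walk_dist_root)
next
  case (Suc i)
  let ?mu = "(1 + 9 * eps) / 2"
  let ?F = "\<lambda>i. avg_bits ((off + i) * Bs) (\<lambda>ys. potential K t (walk_run K off Bs cmp i ys))"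
  have mu: "0 \<le> ?mu" "?mu < 1" using eps by auto
  have "?F (Suc i) \<le> ?mu * ?F i + 3 * eps" by (rule avg_potential_walk_run_Suc[OF t eps(1) err])
  also have "\<dots> \<le> ?mu * (?mu ^ i * (2 ^ K - 1) + 3 * eps / (1 - ?mu)) + 3 * eps"
    by (intro add_right_mono mult_left_mono Suc.IH mu)
  also have "\<dots> = ?mu ^ Suc i * (2 ^ K - 1) + 3 * eps / (1 - ?mu)"
    using mu by (simp add: field_simps)
  finally show ?case .
qed

lemma potential_ge_wrong_leaf:
  assumes "walk_node K x" "t < 2 ^ K"
  shows "(if x \<noteq> (t, 0) then 1 else 0) \<le> potential K t x"
proof (cases "x = (t, 0)")
  case False
  then have "walk_dist K t x \<noteq> 0" using walk_dist_eq_0D[of K t] assms by (cases x) auto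
  then have "(2::real) ^ 1 \<le> 2 ^ walk_dist K t x" by (intro power_increasing) auto
  then show ?thesis using False by (simp add: potential_def)
qed (simp add: potential_def)

text \<open>With error at most \<open>1/256\<close> per comparison, \<open>2 K + 6\<close> steps reach the leaf \<open>t\<close> with
  probability at least \<open>9/10\<close>: the factor \<open>\<mu> = (1 + 9/256)/2\<close> satisfies \<open>2 \<mu>\<^sup>2 \<le> 1\<close>,
  so \<open>\<mu>\<^sup>2\<^sup>K\<^sup>+\<^sup>6 2\<^sup>K \<le> \<mu>\<^sup>6\<close>.\<close>
lemma prob_walk_run_wrong:
  fixes cmp :: "nat \<Rightarrow> nat \<Rightarrow> bool list \<Rightarrow> bool"
  assumes t: "t < 2 ^ K"
    and err: "\<And>i p. i < 3 \<Longrightarrow> prob_bits Bs (\<lambda>z. cmp i p z \<noteq> (p \<le> t)) \<le> 1/256"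
    and M: "(off + (2 * K + 6)) * Bs \<le> M"
  shows "prob_bits M (\<lambda>xs. walk_run K off Bs cmp (2 * K + 6) xs \<noteq> (t, 0)) \<le> 1/10"
proof -
  let ?T = "2 * K + 6"
  let ?m = "(off + ?T) * Bs"
  let ?mu = "(1 + 9 * (1/256)) / 2 :: real"
  have "prob_bits M (\<lambda>xs. walk_run K off Bs cmp ?T xs \<noteq> (t, 0))
      = prob_bits (?m + (M - ?m)) (\<lambda>xs. walk_run K off Bs cmp ?T xs \<noteq> (t, 0))"
    using M by simp
  also have "\<dots> = avg_bits ?m (\<lambda>ys. if walk_run K off Bs cmp ?T ys \<noteq> (t, 0) then 1 else 0)"
    unfolding prob_bits_eq_avg by (rule avg_bits_prefix) (simp add: walk_run_append)
  also have "\<dots> \<le> avg_bits ?m (\<lambda>ys. potential K t (walk_run K off Bs cmp ?T ys))"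
    using walk_node_walk_run[of K off Bs cmp ?T] potential_ge_wrong_leaf[OF _ t]
    by (intro avg_bits_mono) simp
  also have "\<dots> \<le> ?mu ^ ?T * (2 ^ K - 1) + 3 * (1/256) / (1 - ?mu)"
    by (rule avg_potential_walk_run[OF t _ _ err]) auto
  also have "\<dots> \<le> 1/10"
  proof -
    have "?mu ^ ?T * (2 ^ K - 1) \<le> ?mu ^ 6 * (2 * ?mu ^ 2) ^ K"
      by (simp add: power_add power_mult power_mult_distrib)
    also have "\<dots> \<le> ?mu ^ 6" by (intro mult_left_le power_le_one) (auto simp: power2_eq_square)
    finally show ?thesis by (simp add: power_divide)
  qed
  finally show ?thesis .
qed

text \<open>Table \<open>i\<close> of a family of random tables assigning \<open>b\<close> bits to each code below \<open>W\<close>,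
  read off consecutive segments of \<open>z\<close>.\<close>
definition hash_bits :: "nat \<Rightarrow> nat \<Rightarrow> ('w \<Rightarrow> nat) \<Rightarrow> nat \<Rightarrow> bool list \<Rightarrow> 'w \<Rightarrow> bool list" where
  "hash_bits W b enc i z w = map (\<lambda>k. z ! (i * W * b + enc w * b + k)) [0..<b]"

lemma length_hash_bits [simp]: "length (hash_bits W b enc i z w) = b"
  unfolding hash_bits_def by simp

lemma prob_hash_bits_collision:
  assumes "enc w \<noteq> enc w'" "enc w < W" "enc w' < W" "i < T"
  shows "prob_bits (T * W * b) (\<lambda>z. hash_bits W b enc i z w = hash_bits W b enc i z w') = 1 / 2 ^ b"
proof -
  let ?p = "\<lambda>k. i * W * b + enc w * b + k" and ?q = "\<lambda>k. i * W * b + enc w' * b + k"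
  have eq: "hash_bits W b enc i z w = hash_bits W b enc i z w' \<longleftrightarrow> (\<forall>k<b. z ! ?p k = z ! ?q k)" for z
    unfolding hash_bits_def by (simp add: list_eq_iff_nth_eq)
  have bound: "i * W * b + e * b + k < T * W * b" if "e < W" "k < b" for e k
  proof -
    have "e * b + k < (e + 1) * b" using that by simp
    also have "(e + 1) * b \<le> W * b" using that by (intro mult_le_mono1) simp
    finally have "e * b + k < W * b" .
    moreover have "(i + 1) * (W * b) \<le> T * (W * b)" using assms(4) by (intro mult_le_mono1) simp
    ultimately show ?thesis by (simp add: algebra_simps)
  qed
  have disjoint: "enc w * b + k \<noteq> enc w' * b + k'" if "k < b" "k' < b" for k k'
  proof
    assume "enc w * b + k = enc w' * b + k'"
    then have "(enc w * b + k) div b = (enc w' * b + k') div b" by simp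
    then show False using that assms(1) by simp
  qed
  have "prob_bits (T * W * b) (\<lambda>z. \<forall>k<b. z ! ?p k = z ! ?q k) = 1 / 2 ^ b"
    by (rule prob_bits_pairs_equal) (auto simp: inj_on_def disjoint bound assms)
  then show ?thesis unfolding eq .
qed

fun bits_of_nat :: "nat \<Rightarrow> bool list" where
  "bits_of_nat n = (if n = 0 then [] else odd n # bits_of_nat (n div 2))"

fun nat_of_bits :: "bool list \<Rightarrow> nat" where
  "nat_of_bits [] = 0"
| "nat_of_bits (b # bs) = (if b then 1 else 0) + 2 * nat_of_bits bs"

declare bits_of_nat.simps [simp del]

lemma nat_of_bits_of_nat [simp]: "nat_of_bits (bits_of_nat n) = n"
  by (induction n rule: bits_of_nat.induct) (subst bits_of_nat.simps, auto)

lemma power_length_bits_of_nat_le: "0 < n \<Longrightarrow> 2 ^ length (bits_of_nat n) \<le> 2 * n"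
proof (induction n rule: bits_of_nat.induct)
  case (1 n)
  have len: "length (bits_of_nat n) = Suc (length (bits_of_nat (n div 2)))"
    using 1(2) by (subst bits_of_nat.simps) simp
  show ?case
  proof (cases "n div 2 = 0")
    case True
    then have "n = 1" using 1(2) by auto
    then show ?thesis by (simp add: bits_of_nat.simps)
  next
    case False
    then show ?thesis using 1 len by simp
  qed
qed

lemma length_bits_of_nat_le_log:
  assumes "n \<le> m"
  shows "real (length (bits_of_nat n)) \<le> 1 + log 2 (real m + 1)"
proof (cases "n = 0")
  case False
  then have "real (length (bits_of_nat n)) \<le> log 2 (real (2 * n))"
    using power_length_bits_of_nat_le le_log2_of_power by blast
  also have "\<dots> = 1 + log 2 (real n)" using False by (simp add: log_mult)
  also have "\<dots> \<le> 1 + log 2 (real m + 1)" using False assms by simp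
  finally show ?thesis .
qed (simp add: bits_of_nat.simps)

section \<open>The protocol\<close>

text \<open>In stage \<open>Doubling k\<close> the parties test whether the first \<open>2\<^sup>k - 1\<close> phrases are common,
  in \<open>Search K i c h\<close> they perform step \<open>i\<close> of the walk on the tree of height \<open>K\<close> from
  node \<open>(c, h)\<close>, and in \<open>SendSrc j\<close> and \<open>SendLen j s\<close> Alice sends source and copy length
  of phrase \<open>j\<close>. Round \<open>k\<close> of the doubling uses coin block \<open>k\<close>, step \<open>i\<close> of the search
  coin block \<open>K + 1 + i\<close>; each block holds three hash tables.\<close>
datatype stage = Doubling nat | Search nat nat nat nat | SendSrc nat | SendLen nat nat | Done nat

definition alice_message :: "nat \<Rightarrow> 'a::finite list \<Rightarrow> bool list \<Rightarrow> stage \<Rightarrow> bool list" where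
  "alice_message W A xs st = (let S = end_marked False A; Bs = 3*W*8 in case st of
     Doubling k \<Rightarrow> hash_bits W 8 to_nat 0 (block Bs xs k) (phrase_prefix S (2^k - 1))
   | Search K i c h \<Rightarrow> hash_bits W 8 to_nat 0 (block Bs xs (K+1+i)) (phrase_prefix S (c*2^h))
        @ hash_bits W 8 to_nat 1 (block Bs xs (K+1+i)) (phrase_prefix S ((c+1)*2^h))
        @ hash_bits W 8 to_nat 2 (block Bs xs (K+1+i)) (phrase_prefix S ((2*c+1)*2^(h-1)))
   | SendSrc j \<Rightarrow> bits_of_nat (copy_src S (phrase_start S j))
   | SendLen j s \<Rightarrow> bits_of_nat (copy_len S (phrase_start S j))
   | Done x \<Rightarrow> [])"

definition bob_message :: "nat \<Rightarrow> 'a::finite list \<Rightarrow> bool list \<Rightarrow> stage \<Rightarrow> bool list \<Rightarrow> bool list" where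
  "bob_message W B xs st am = (let S = end_marked True B; Bs = 3*W*8 in case st of
     Doubling k \<Rightarrow> [am = hash_bits W 8 to_nat 0 (block Bs xs k) (phrase_prefix S (2^k - 1))]
   | Search K i c h \<Rightarrow>
       [take 8 am = hash_bits W 8 to_nat 0 (block Bs xs (K+1+i)) (phrase_prefix S (c*2^h)),
        take 8 (drop 8 am) = hash_bits W 8 to_nat 1 (block Bs xs (K+1+i)) (phrase_prefix S ((c+1)*2^h)),
        drop 16 am = hash_bits W 8 to_nat 2 (block Bs xs (K+1+i)) (phrase_prefix S ((2*c+1)*2^(h-1)))]
   | SendSrc j \<Rightarrow> []
   | SendLen j s \<Rightarrow>
       bits_of_nat (phrase_start S j + lcp (drop (phrase_start S j) S) (take (nat_of_bits am) (drop s S)))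
   | Done x \<Rightarrow> [])"

definition next_stage :: "stage \<Rightarrow> bool list \<Rightarrow> bool list \<Rightarrow> stage" where
  "next_stage st am bm = (case st of
     Doubling k \<Rightarrow> (if bm = [True] then Doubling (Suc k) else Search k 0 0 k)
   | Search K i c h \<Rightarrow> (case walk_step K (c,h) (bm!0) (bm!1) (bm!2) of (c',h') \<Rightarrow>
        if Suc i = 2*K+6 then SendSrc c' else Search K (Suc i) c' h')
   | SendSrc j \<Rightarrow> SendLen j (nat_of_bits am)
   | SendLen j s \<Rightarrow> Done (nat_of_bits bm)
   | Done x \<Rightarrow> Done x)"

fun replay :: "stage \<Rightarrow> bool list list \<Rightarrow> stage" where
  "replay s (a # b # t) = replay (next_stage s a b) t"
| "replay s _ = s"

definition is_done :: "stage \<Rightarrow> bool" where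
  "is_done s = (case s of Done _ \<Rightarrow> True | _ \<Rightarrow> False)"

definition stage_output :: "stage \<Rightarrow> nat" where
  "stage_output s = (case s of Done x \<Rightarrow> x | _ \<Rightarrow> 0)"

definition lcp_protocol :: "nat \<Rightarrow> nat \<Rightarrow> 'a::finite protocol" where
  "lcp_protocol W M = \<lparr>
     turn = (\<lambda>r t. if odd (length t) then Some False
                     else if is_done (replay (Doubling 0) t) then None else Some True),
     alice_msg = (\<lambda>A r t. alice_message W A (map r [0..<M]) (replay (Doubling 0) t)),
     bob_msg = (\<lambda>B r t. bob_message W B (map r [0..<M]) (replay (Doubling 0) t) (last t)),
     outp = (\<lambda>r t. stage_output (replay (Doubling 0) t)) \<rparr>"

lemma replay_append_pair: "even (length t) \<Longrightarrow> replay s (t @ [a, b]) = next_stage (replay s t) a b"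
  by (induction s t rule: replay.induct) auto

lemma replay_append_single: "even (length t) \<Longrightarrow> replay s (t @ [a]) = replay s t"
  by (induction s t rule: replay.induct) auto

fun stage_at :: "nat \<Rightarrow> 'a::finite list \<Rightarrow> 'a list \<Rightarrow> bool list \<Rightarrow> nat \<Rightarrow> stage" where
  "stage_at W A B xs 0 = Doubling 0"
| "stage_at W A B xs (Suc k) =
     (let s = stage_at W A B xs k; a = alice_message W A xs s
      in next_stage s a (bob_message W B xs s a))"

fun transcript_at :: "nat \<Rightarrow> 'a::finite list \<Rightarrow> 'a list \<Rightarrow> bool list \<Rightarrow> nat \<Rightarrow> bool list list" where
  "transcript_at W A B xs 0 = []"
| "transcript_at W A B xs (Suc k) =
     (let s = stage_at W A B xs k; a = alice_message W A xs s
      in transcript_at W A B xs k @ [a, bob_message W B xs s a])"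

lemma length_transcript_at: "length (transcript_at W A B xs k) = 2*k"
  by (induction k) (auto simp: Let_def)

lemma replay_transcript_at: "replay (Doubling 0) (transcript_at W A B xs k) = stage_at W A B xs k"
  by (induction k) (auto simp: Let_def replay_append_pair length_transcript_at)

lemma transcript_eq_transcript_at:
  assumes "\<forall>i<k. \<not> is_done (stage_at W A B (map r [0..<M]) i)"
  shows "transcript (lcp_protocol W M) A B r (2*k) = transcript_at W A B (map r [0..<M]) k"
  using assms
proof (induction k)
  case 0
  then show ?case by simp
next
  case (Suc k)
  let ?xs = "map r [0..<M]"
  have IH: "transcript (lcp_protocol W M) A B r (2*k) = transcript_at W A B ?xs k" using Suc by simp
  have nd: "\<not> is_done (stage_at W A B ?xs k)" using Suc.prems by simp
  let ?a = "alice_message W A ?xs (stage_at W A B ?xs k)"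
  have t1: "transcript (lcp_protocol W M) A B r (Suc (2*k)) = transcript_at W A B ?xs k @ [?a]"
    using IH nd by (simp add: lcp_protocol_def length_transcript_at replay_transcript_at)
  have "transcript (lcp_protocol W M) A B r (Suc (Suc (2*k)))
      = transcript_at W A B ?xs k @ [?a] @ [bob_message W B ?xs (stage_at W A B ?xs k) ?a]"
    using t1
    by (simp add: lcp_protocol_def length_transcript_at replay_append_single replay_transcript_at)
  then show ?case by (simp add: Let_def)
qed

lemma good_run_transcript_at:
  assumes "\<forall>i<k. \<not> is_done (stage_at W A B (map r [0..<M]) i)"
    and "stage_at W A B (map r [0..<M]) k = Done ans"
    and "real (2*k) \<le> R" "real (sum_list (map length (transcript_at W A B (map r [0..<M]) k))) \<le> Bits"
  shows "good_run (lcp_protocol W M) A B ans R Bits r"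
  unfolding good_run_def
  using assms transcript_eq_transcript_at[OF assms(1)]
  by (intro exI[of _ "2*k"])
    (simp add: lcp_protocol_def length_transcript_at replay_transcript_at is_done_def stage_output_def)

lemma bits_transcript_at_Suc:
  "sum_list (map length (transcript_at W A B xs (Suc k))) = sum_list (map length (transcript_at W A B xs k))
    + length (alice_message W A xs (stage_at W A B xs k))
    + length (bob_message W B xs (stage_at W A B xs k) (alice_message W A xs (stage_at W A B xs k)))"
  by (simp add: Let_def)

lemma alice_message_Doubling:
  "alice_message W A xs (Doubling k)
    = hash_bits W 8 to_nat 0 (block (3*W*8) xs k) (phrase_prefix (end_marked False A) (2^k - 1))"
  by (simp add: alice_message_def)

lemma length_alice_message_Search: "length (alice_message W A xs (Search K i c h)) = 24"
  by (simp add: alice_message_def Let_def)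

lemma length_bob_message_Doubling: "length (bob_message W B xs (Doubling k) am) = 1"
  by (simp add: bob_message_def Let_def)

lemma length_bob_message_Search: "length (bob_message W B xs (Search K i c h) am) = 3"
  by (simp add: bob_message_def Let_def)

lemma transcript_lcp_protocol_cong:
  assumes "map r [0..<M] = map r' [0..<M]"
  shows "transcript (lcp_protocol W M) A B r k = transcript (lcp_protocol W M) A B r' k"
  by (induction k) (simp_all add: lcp_protocol_def Let_def assms del: map_eq_conv)

lemma measure_good_run_lcp_protocol:
  "measure coins {r \<in> space coins. good_run (lcp_protocol W M) A B ans R Bits r}
    = prob_bits M (\<lambda>xs. good_run (lcp_protocol W M) A B ans R Bits (coins_of_list xs))"
proof -
  have "good_run (lcp_protocol W M) A B ans R Bits r
      = good_run (lcp_protocol W M) A B ans R Bits (coins_of_list (map r [0..<M]))" for r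
    using transcript_lcp_protocol_cong[of r M "coins_of_list (map r [0..<M])" W A B]
    unfolding good_run_def by (simp add: map_coins_of_list lcp_protocol_def)
  then show ?thesis
    using measure_coins_prefix_event[where m=M and
        Q="\<lambda>xs. good_run (lcp_protocol W M) A B ans R Bits (coins_of_list xs)"]
    by simp
qed

section \<open>Analysis of the protocol\<close>

text \<open>The hash tables are indexed by the codes of all end-marked strings of length at most
  \<open>n + 1\<close>, of which there are finitely many since the alphabet is finite.\<close>
definition code_bound :: "'a::finite itself \<Rightarrow> nat \<Rightarrow> nat" where
  "code_bound _ n = Suc (Max (to_nat ` {w :: ('a + bool) list. length w \<le> Suc n}))"

lemma to_nat_less_code_bound:
  "length (w :: ('a::finite + bool) list) \<le> Suc n \<Longrightarrow> to_nat w < code_bound TYPE('a) n"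
proof -
  assume "length w \<le> Suc n"
  moreover have "finite {w :: ('a + bool) list. length w \<le> Suc n}"
    using finite_lists_length_le[of "UNIV :: ('a + bool) set" "Suc n"] by simp
  ultimately have "to_nat w \<le> Max (to_nat ` {w :: ('a + bool) list. length w \<le> Suc n})"
    by (intro Max_ge) auto
  then show ?thesis unfolding code_bound_def by simp
qed

definition hash_test :: "nat \<Rightarrow> 'a::finite list \<Rightarrow> 'a list \<Rightarrow> nat \<Rightarrow> nat \<Rightarrow> bool list \<Rightarrow> bool" where
  "hash_test W A B i p z \<longleftrightarrow>
     hash_bits W 8 to_nat i z (phrase_prefix (end_marked False A) p)
     = hash_bits W 8 to_nat i z (phrase_prefix (end_marked True B) p)"

lemma hash_test_if_le: "p \<le> lcp_phrase A B \<Longrightarrow> hash_test W A B i p z"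
  unfolding hash_test_def using phrase_prefix_eq_iff by metis

lemma prob_hash_test_wrong:
  fixes A B :: "'a::finite list"
  assumes "length A \<le> n" "length B \<le> n" "i < 3"
  defines "W \<equiv> code_bound TYPE('a) n"
  shows "prob_bits (3 * W * 8) (\<lambda>z. hash_test W A B i p z \<noteq> (p \<le> lcp_phrase A B)) \<le> 1/256"
proof (cases "p \<le> lcp_phrase A B")
  case True
  then show ?thesis unfolding prob_bits_def using hash_test_if_le[OF True] by simp
next
  case False
  let ?a = "phrase_prefix (end_marked False A) p" and ?b = "phrase_prefix (end_marked True B) p"
  have "?a \<noteq> ?b" using False phrase_prefix_eq_iff by metis
  moreover have "length ?a \<le> Suc n" "length ?b \<le> Suc n"
    using length_phrase_prefix_le[of "end_marked False A" p]
      length_phrase_prefix_le[of "end_marked True B" p] assms by simp_all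
  ultimately have "prob_bits (3 * W * 8) (\<lambda>z. hash_test W A B i p z) = 1 / 2 ^ 8"
    unfolding hash_test_def W_def
    by (intro prob_hash_bits_collision) (use to_nat_less_code_bound assms(3) in auto)
  then show ?thesis using False by simp
qed

definition doubling_rounds :: "'a list \<Rightarrow> 'a list \<Rightarrow> nat" where
  "doubling_rounds A B = (LEAST k. Suc (lcp_phrase A B) < 2 ^ k)"

lemma lcp_phrase_less_doubling_rounds: "Suc (lcp_phrase A B) < 2 ^ doubling_rounds A B"
  unfolding doubling_rounds_def by (rule LeastI[of _ "Suc (lcp_phrase A B)"]) (rule less_exp)

lemma power_le_if_less_doubling_rounds: "k < doubling_rounds A B \<Longrightarrow> 2 ^ k \<le> Suc (lcp_phrase A B)"
  unfolding doubling_rounds_def using not_less_Least by (metis not_less)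

lemma doubling_rounds_le: "doubling_rounds A B \<le> Suc (lcp_phrase A B)"
  unfolding doubling_rounds_def by (rule Least_le) (rule less_exp)

lemma doubling_rounds_le_log:
  assumes "lcp_phrase A B \<le> m"
  shows "real (doubling_rounds A B) \<le> 1 + log 2 (real m + 1)"
proof (cases "doubling_rounds A B")
  case (Suc k)
  then have "2 ^ k \<le> Suc m" using power_le_if_less_doubling_rounds[of k A B] assms by simp
  then have "real k \<le> log 2 (real (Suc m))" by (rule le_log2_of_power)
  then show ?thesis using Suc by (simp add: add.commute)
qed simp

text \<open>The protocol succeeds if the doubling stops at the right round and the subsequent search
  ends at the leaf \<open>lcp_phrase A B\<close>.\<close>
definition doubling_stops :: "nat \<Rightarrow> 'a::finite list \<Rightarrow> 'a list \<Rightarrow> bool list \<Rightarrow> bool" where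
  "doubling_stops W A B xs \<longleftrightarrow>
     \<not> hash_test W A B 0 (2 ^ doubling_rounds A B - 1) (block (3*W*8) xs (doubling_rounds A B))"

definition search_result :: "nat \<Rightarrow> 'a::finite list \<Rightarrow> 'a list \<Rightarrow> bool list \<Rightarrow> nat \<times> nat" where
  "search_result W A B xs = walk_run (doubling_rounds A B) (Suc (doubling_rounds A B)) (3*W*8)
     (hash_test W A B) (2 * doubling_rounds A B + 6) xs"

lemma prob_tests_pass:
  fixes A B :: "'a::finite list"
  assumes "length A \<le> n" "length B \<le> n"
  defines "W \<equiv> code_bound TYPE('a) n"
  assumes M: "(3 * n + 10) * (3 * W * 8) \<le> M"
  shows "3/4 \<le> prob_bits M (\<lambda>xs. doubling_stops W A B xs \<and> search_result W A B xs = (lcp_phrase A B, 0))"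
proof -
  let ?K = "doubling_rounds A B" and ?t = "lcp_phrase A B" and ?Bs = "3 * W * 8"
  have "?K \<le> Suc n"
    using doubling_rounds_le[of A B] lcp_phrase_le_lcp[of A B] lcp_le_length[of A B] assms(1) by linarith
  then have "Suc ?K \<le> 3 * n + 10" "Suc ?K + (2 * ?K + 6) \<le> 3 * n + 10" by linarith+
  then have M1: "Suc ?K * ?Bs \<le> M" and M2: "(Suc ?K + (2 * ?K + 6)) * ?Bs \<le> M"
    using M by (meson le_trans mult_le_mono1)+
  have t: "?t < 2 ^ ?K" using lcp_phrase_less_doubling_rounds[of A B] by simp
  have err: "\<And>i p. i < 3 \<Longrightarrow> prob_bits ?Bs (\<lambda>z. hash_test W A B i p z \<noteq> (p \<le> ?t)) \<le> 1/256"
    unfolding W_def using prob_hash_test_wrong assms(1,2) by blast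
  have "prob_bits M (\<lambda>xs. \<not> doubling_stops W A B xs) = prob_bits ?Bs (hash_test W A B 0 (2 ^ ?K - 1))"
    unfolding doubling_stops_def using prob_bits_block[OF M1] by simp
  also have "\<dots> = prob_bits ?Bs (\<lambda>z. hash_test W A B 0 (2 ^ ?K - 1) z \<noteq> (2 ^ ?K - 1 \<le> ?t))"
  proof -
    have "\<not> 2 ^ ?K - 1 \<le> ?t" using lcp_phrase_less_doubling_rounds[of A B] by simp
    then show ?thesis by simp
  qed
  also have "\<dots> \<le> 1/256" by (rule err) simp
  finally have "prob_bits M (\<lambda>xs. \<not> doubling_stops W A B xs) \<le> 1/256" .
  moreover have "prob_bits M (\<lambda>xs. search_result W A B xs \<noteq> (?t, 0)) \<le> 1/10"
    unfolding search_result_def by (rule prob_walk_run_wrong[OF t err M2])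
  ultimately have "prob_bits M (\<lambda>xs. \<not> doubling_stops W A B xs \<or> search_result W A B xs \<noteq> (?t, 0)) \<le> 1/4"
    using prob_bits_disj_le[of M "\<lambda>xs. \<not> doubling_stops W A B xs"
        "\<lambda>xs. search_result W A B xs \<noteq> (?t, 0)"] by linarith
  then show ?thesis
    using prob_bits_not[of M "\<lambda>xs. \<not> doubling_stops W A B xs \<or> search_result W A B xs \<noteq> (?t, 0)"]
    by simp
qed

lemma bob_message_Doubling:
  "bob_message W B xs (Doubling k) (alice_message W A xs (Doubling k))
    = [hash_test W A B 0 (2^k - 1) (block (3*W*8) xs k)]"
  by (simp add: alice_message_def bob_message_def hash_test_def)

lemma bob_message_Search:
  "bob_message W B xs (Search K i c h) (alice_message W A xs (Search K i c h)) =
    [hash_test W A B 0 (c * 2^h) (block (3*W*8) xs (Suc K + i)),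
     hash_test W A B 1 ((c + 1) * 2^h) (block (3*W*8) xs (Suc K + i)),
     hash_test W A B 2 ((2 * c + 1) * 2^(h - 1)) (block (3*W*8) xs (Suc K + i))]"
  by (simp add: alice_message_def bob_message_def hash_test_def Let_def)

lemma stage_at_doubling: "k \<le> doubling_rounds A B \<Longrightarrow> stage_at W A B xs k = Doubling k"
proof (induction k)
  case (Suc k)
  then have "2 ^ k - 1 \<le> lcp_phrase A B" using power_le_if_less_doubling_rounds[of k A B] by simp
  then have "hash_test W A B 0 (2 ^ k - 1) (block (3*W*8) xs k)" by (rule hash_test_if_le)
  then show ?case using Suc by (simp add: Let_def bob_message_Doubling next_stage_def)
qed simp

lemma stage_at_search:
  assumes "doubling_stops W A B xs"
  defines "K \<equiv> doubling_rounds A B"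
  shows "i \<le> 2 * K + 5 \<Longrightarrow> stage_at W A B xs (Suc K + i) =
    (case walk_run K (Suc K) (3*W*8) (hash_test W A B) i xs of (c, h) \<Rightarrow> Search K i c h)"
proof (induction i)
  case 0
  then show ?case
    using assms stage_at_doubling[of K A B W xs]
    by (simp add: Let_def bob_message_Doubling next_stage_def doubling_stops_def)
next
  case (Suc i)
  obtain c h where ch: "walk_run K (Suc K) (3*W*8) (hash_test W A B) i xs = (c, h)" by fastforce
  then have "stage_at W A B xs (Suc K + i) = Search K i c h" using Suc by simp
  then show ?case using Suc.prems ch
    by (simp add: Let_def bob_message_Search next_stage_def split: prod.splits)
qed

lemma stage_at_final:
  assumes "doubling_stops W A B xs" and "search_result W A B xs = (lcp_phrase A B, 0)"
  defines "N \<equiv> Suc (doubling_rounds A B) + (2 * doubling_rounds A B + 6)"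
  shows "stage_at W A B xs N = SendSrc (lcp_phrase A B)"
    and "stage_at W A B xs (Suc N) = SendLen (lcp_phrase A B)
      (copy_src (end_marked False A) (phrase_start (end_marked False A) (lcp_phrase A B)))"
    and "stage_at W A B xs (Suc (Suc N)) = Done (lcp A B)"
proof -
  let ?K = "doubling_rounds A B"
  obtain c h where ch: "walk_run ?K (Suc ?K) (3*W*8) (hash_test W A B) (2 * ?K + 5) xs = (c, h)"
    by fastforce
  have "stage_at W A B xs (Suc ?K + (2 * ?K + 5)) = Search ?K (2 * ?K + 5) c h"
    using stage_at_search[OF assms(1), of "2 * ?K + 5"] ch by simp
  then have "stage_at W A B xs (Suc (Suc ?K + (2 * ?K + 5)))
      = SendSrc (fst (walk_run ?K (Suc ?K) (3*W*8) (hash_test W A B) (Suc (2 * ?K + 5)) xs))"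
    by (subst stage_at.simps(2), subst walk_run.simps(2))
      (use ch in \<open>simp add: Let_def bob_message_Search next_stage_def split: prod.splits\<close>)
  moreover have "N = Suc (Suc ?K + (2 * ?K + 5))" "Suc (2 * ?K + 5) = 2 * ?K + 6"
    unfolding N_def by simp_all
  ultimately show "stage_at W A B xs N = SendSrc (lcp_phrase A B)"
    using assms(2) unfolding search_result_def by simp
  then show "stage_at W A B xs (Suc N) = SendLen (lcp_phrase A B)
      (copy_src (end_marked False A) (phrase_start (end_marked False A) (lcp_phrase A B)))"
    by (simp add: Let_def next_stage_def alice_message_def)
  then show "stage_at W A B xs (Suc (Suc N)) = Done (lcp A B)"
    using lcp_via_copy[where A=A and B=B]
    by (subst stage_at.simps(2))
      (simp add: Let_def next_stage_def alice_message_def bob_message_def del: stage_at.simps)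
qed

lemma stage_at_not_done:
  assumes "doubling_stops W A B xs" and "search_result W A B xs = (lcp_phrase A B, 0)"
    and "i \<le> Suc (Suc (doubling_rounds A B) + (2 * doubling_rounds A B + 6))"
  shows "\<not> is_done (stage_at W A B xs i)"
proof -
  let ?K = "doubling_rounds A B"
  consider "i \<le> ?K" | "?K < i" "i \<le> Suc ?K + (2 * ?K + 5)"
    | "i = Suc ?K + (2 * ?K + 6)" | "i = Suc (Suc ?K + (2 * ?K + 6))"
    using assms(3) by linarith
  then show ?thesis
  proof cases
    case 2
    then have "i = Suc ?K + (i - Suc ?K)" "i - Suc ?K \<le> 2 * ?K + 5" by simp_all
    then show ?thesis
      using stage_at_search[OF assms(1), of "i - Suc ?K"]
      by (simp add: is_done_def split: prod.splits)
  qed (use stage_at_doubling[of i A B W xs] stage_at_final[OF assms(1,2)] in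
    \<open>simp_all add: is_done_def\<close>)
qed

lemma bits_doubling:
  "k \<le> Suc (doubling_rounds A B) \<Longrightarrow> sum_list (map length (transcript_at W A B xs k)) = 9 * k"
proof (induction k)
  case (Suc k)
  then have "stage_at W A B xs k = Doubling k" using stage_at_doubling[of k A B W xs] by simp
  then show ?case
    using Suc bits_transcript_at_Suc[of W A B xs k]
    by (simp add: length_bob_message_Doubling alice_message_Doubling)
qed simp

lemma bits_search:
  assumes "doubling_stops W A B xs"
  defines "K \<equiv> doubling_rounds A B"
  shows "i \<le> 2 * K + 6 \<Longrightarrow>
    sum_list (map length (transcript_at W A B xs (Suc K + i))) = 9 * Suc K + 27 * i"
proof (induction i)
  case 0
  then show ?case using bits_doubling[of "Suc K" A B W xs] K_def by simp
next
  case (Suc i)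
  obtain c h where "walk_run K (Suc K) (3*W*8) (hash_test W A B) i xs = (c, h)" by fastforce
  then have "stage_at W A B xs (Suc K + i) = Search K i c h"
    using stage_at_search[OF assms(1), of i] Suc.prems K_def by simp
  then show ?case
    using bits_transcript_at_Suc[of W A B xs "Suc K + i"] Suc
    by (simp add: length_bob_message_Search length_alice_message_Search)
qed

lemma bits_transcript_at_final:
  assumes "doubling_stops W A B xs" and "search_result W A B xs = (lcp_phrase A B, 0)"
  defines "K \<equiv> doubling_rounds A B" and "u \<equiv> phrase_start (end_marked False A) (lcp_phrase A B)"
  shows "sum_list (map length (transcript_at W A B xs (Suc (Suc (Suc K + (2 * K + 6))))))
    = 9 * Suc K + 27 * (2 * K + 6) + length (bits_of_nat (copy_src (end_marked False A) u))
      + length (bits_of_nat (copy_len (end_marked False A) u)) + length (bits_of_nat (lcp A B))"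
proof -
  let ?N = "Suc K + (2 * K + 6)"
  note final = stage_at_final[OF assms(1,2), folded K_def]
  have "sum_list (map length (transcript_at W A B xs (Suc ?N)))
      = 9 * Suc K + 27 * (2 * K + 6) + length (bits_of_nat (copy_src (end_marked False A) u))"
    using bits_transcript_at_Suc[of W A B xs ?N] bits_search[OF assms(1), folded K_def, of "2 * K + 6"]
      final(1)
    by (simp add: alice_message_def bob_message_def Let_def u_def)
  then show ?thesis
    using bits_transcript_at_Suc[of W A B xs "Suc ?N"] final(2) lcp_via_copy[where A=A and B=B]
    by (simp add: alice_message_def bob_message_def Let_def u_def K_def)
qed

lemma good_run_if_tests_pass:
  fixes A B :: "'a::finite list"
  assumes "length xs = M"
    and "doubling_stops W A B xs" and "search_result W A B xs = (lcp_phrase A B, 0)"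
  shows "good_run (lcp_protocol W M) A B (lcp A B)
    (240 * (1 + log 2 (real (lz_phrases (take (lcp A B) A)) + 1)))
    (240 * (1 + log 2 (real (lcp A B) + 1))) (coins_of_list xs)"
proof -
  let ?K = "doubling_rounds A B" and ?l = "lcp A B"
  let ?N = "Suc (Suc (Suc ?K + (2 * ?K + 6)))"
  let ?u = "phrase_start (end_marked False A) (lcp_phrase A B)"
  let ?L = "log 2 (real ?l + 1)" and ?Z = "log 2 (real (lz_phrases (take ?l A)) + 1)"
  have xs: "map (coins_of_list xs) [0..<M] = xs" by (rule map_coins_of_list[OF assms(1)])
  have KZ: "real ?K \<le> 1 + ?Z" and KL: "real ?K \<le> 1 + ?L"
    using doubling_rounds_le_log lcp_phrase_le_lz_phrases lcp_phrase_le_lcp by blast+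
  have bits: "real (length (bits_of_nat (copy_src (end_marked False A) ?u))) \<le> 1 + ?L"
    "real (length (bits_of_nat (copy_len (end_marked False A) ?u))) \<le> 1 + ?L"
    "real (length (bits_of_nat ?l)) \<le> 1 + ?L"
    using lcp_via_copy(3,4)[where A=A and B=B] by (auto intro: length_bits_of_nat_le_log)
  show ?thesis
  proof (rule good_run_transcript_at[where k="?N"])
    show "\<forall>i<?N. \<not> is_done (stage_at W A B (map (coins_of_list xs) [0..<M]) i)"
      using stage_at_not_done[OF assms(2,3)] xs by simp
    show "stage_at W A B (map (coins_of_list xs) [0..<M]) ?N = Done ?l"
      using stage_at_final(3)[OF assms(2,3)] xs by simp
    have "0 \<le> ?Z" "0 \<le> ?L" by simp_all
    have "real (2 * ?N) = 6 * real ?K + 18" by simp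
    also have "\<dots> \<le> 240 * (1 + ?Z)" using KZ \<open>0 \<le> ?Z\<close> unfolding distrib_left by linarith
    finally show "real (2 * ?N) \<le> 240 * (1 + ?Z)" .
    have "real (sum_list (map length (transcript_at W A B (map (coins_of_list xs) [0..<M]) ?N)))
      = 9 * (1 + real ?K) + 27 * (2 * real ?K + 6)
        + real (length (bits_of_nat (copy_src (end_marked False A) ?u)))
        + real (length (bits_of_nat (copy_len (end_marked False A) ?u))) + real (length (bits_of_nat ?l))"
      using bits_transcript_at_final[OF assms(2,3)] xs by simp
    also have "\<dots> \<le> 240 * (1 + ?L)"
      using KL bits \<open>0 \<le> ?L\<close> unfolding distrib_left by linarith
    finally show "real (sum_list (map length (transcript_at W A B (map (coins_of_list xs) [0..<M]) ?N)))
      \<le> 240 * (1 + ?L)" .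
  qed
qed

lemma lcp_protocol_succeeds:
  fixes A B :: "'a::finite list"
  assumes "length A \<le> n" "length B \<le> n"
  defines "W \<equiv> code_bound TYPE('a) n"
  defines "M \<equiv> (3 * n + 10) * (3 * W * 8)"
  shows "3/4 \<le> measure coins {r \<in> space coins. good_run (lcp_protocol W M) A B (lcp A B)
    (240 * (1 + log 2 (real (lz_phrases (take (lcp A B) A)) + 1)))
    (240 * (1 + log 2 (real (lcp A B) + 1))) r}"
proof -
  have "3/4 \<le> prob_bits M (\<lambda>xs. doubling_stops W A B xs \<and> search_result W A B xs = (lcp_phrase A B, 0))"
    unfolding W_def M_def using assms(1,2) by (rule prob_tests_pass) simp
  also have "\<dots> \<le> prob_bits M (\<lambda>xs. good_run (lcp_protocol W M) A B (lcp A B)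
      (240 * (1 + log 2 (real (lz_phrases (take (lcp A B) A)) + 1)))
      (240 * (1 + log 2 (real (lcp A B) + 1))) (coins_of_list xs))"
    by (intro prob_bits_mono good_run_if_tests_pass) auto
  finally show ?thesis by (simp add: measure_good_run_lcp_protocol)
qed

theorem theorem1:
  fixes dummy :: "'a :: finite itself"
  shows "\<exists>c::real. c > 0 \<and> (\<exists>p::real. p > 1/2 \<and>
     (\<forall>n::nat. \<exists>P :: 'a protocol.
        \<forall>A B :: 'a list. length A \<le> n \<and> length B \<le> n \<longrightarrow>
          (let l = lcp A B; z = lz_phrases (take l A) in
           measure coins {r \<in> space coins.
              good_run P A B l (c * (1 + log 2 (real z + 1))) (c * (1 + log 2 (real l + 1))) r}
           \<ge> p)))"
proof -
  have "\<exists>P :: 'a protocol. \<forall>A B :: 'a list. length A \<le> n \<and> length B \<le> n \<longrightarrow>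
      (let l = lcp A B; z = lz_phrases (take l A) in
       measure coins {r \<in> space coins.
         good_run P A B l (240 * (1 + log 2 (real z + 1))) (240 * (1 + log 2 (real l + 1))) r}
       \<ge> 3/4)" for n
    using lcp_protocol_succeeds[where n=n] by (auto simp: Let_def)
  then show ?thesis by (intro exI[of _ 240] exI[of _ "3/4"] conjI) auto
qed

end
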